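(* Let $S\subset\mathbb{R}^p$ be a compact set with $\mathrm{cl}(\mathrm{int}(S))=S$, and let $\mu_S$ be the uniform probability measure on $S$. Let $(\delta_k)_{k\in\mathbb{N}}$ be a decreasing sequence of positive numbers converging to $0$. For every $k$, let $d_k$ be the smallest positive integer such that \[2^{3-\frac{\delta_k d_k}{\delta_k+\mathrm{diam}(S)}}\,d_k^p\left(\frac{e}{p}\right)^p\exp\left(\frac{p^2}{d_k}\right)\le\alpha_k,\qquad\text{where}\quad \alpha_k:=\frac{\delta_k^p\,\omega_p}{\lambda(S)}\,\frac{(d_k+1)(d_k+2)(d_k+3)}{(d_k+p+1)(d_k+p+2)(2d_k+p+6)}.\] For every $k$ let $S_k=\{\mathbf{x}\in\mathbb{R}^p:\ s(d_k)\,\Lambda_{\mu_S,d_k}(\mathbf{x})\ge\alpha_k\}$. Then, as $k\to\infty$, $d_H(S_k,S)\to0$ and $d_H(\partial S_k,\partial S)\to0$.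
   Context: $\lambda$ is Lebesgue measure on $\mathbb{R}^p$, and $\mu_S=\lambda_S/\lambda(S)$ where $\lambda_S$ is the restriction of $\lambda$ to $S$. $\mathrm{diam}(S)$ is the diameter of $S$, $\omega_p=\frac{2\pi^{(p+1)/2}}{\Gamma((p+1)/2)}$, and $s(d)=\binom{p+d}{d}$. For a finite Borel measure $\nu$ on $\mathbb{R}^p$ with finite moments and $d\in\mathbb{N}$, the Christoffel function is $\Lambda_{\nu,d}(\xi)=\min\{\int P^2\,d\nu: P\in\mathbb{R}[X]_d,\ P(\xi)=1\}$, where $\mathbb{R}[X]_d$ is the space of real polynomials in $p$ variables of total degree at most $d$ (equivalently $\Lambda_{\nu,d}(\xi)=(\mathbf{v}_d(\xi)^T\mathbf{M}_d(\nu)^{-1}\mathbf{v}_d(\xi))^{-1}$ when the moment matrix $\mathbf{M}_d(\nu)=\int\mathbf{v}_d\mathbf{v}_d^T d\nu$ of the monomial vector $\mathbf{v}_d$ is invertible). $\partial A$ is the topological boundary of $A$, and $d_H(X,Y)=\max\{\sup_{\mathbf{x}\in X}\inf_{\mathbf{y}\in Y}\|\mathbf{x}-\mathbf{y}\|,\ \sup_{\mathbf{y}\in Y}\inf_{\mathbf{x}\in X}\|\mathbf{x}-\mathbf{y}\|\}$ is the Hausdorff distance. *)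

theory Defs
  imports "HOL-Analysis.Analysis"
begin

definition multi_indices :: "nat \<Rightarrow> ('p::finite \<Rightarrow> nat) set" where
  "multi_indices d = {\<alpha>. sum \<alpha> UNIV \<le> d}"

definition poly_deg_le :: "nat \<Rightarrow> (real^'p::finite \<Rightarrow> real) set" where
  "poly_deg_le d = {P. \<exists>c :: ('p \<Rightarrow> nat) \<Rightarrow> real.
      P = (\<lambda>x. \<Sum>\<alpha>\<in>multi_indices d. c \<alpha> * (\<Prod>i\<in>UNIV. (x $ i) ^ (\<alpha> i)))}"

definition christoffel :: "(real^'p::finite) measure \<Rightarrow> nat \<Rightarrow> real^'p \<Rightarrow> real" where
  "christoffel \<nu> d \<xi> = Inf {(\<integral>x. (P x)\<^sup>2 \<partial>\<nu>) | P. P \<in> poly_deg_le d \<and> P \<xi> = 1}"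

definition mu_S :: "(real^'p::finite) set \<Rightarrow> (real^'p) measure" where
  "mu_S S = uniform_measure lborel S"

definition omega :: "nat \<Rightarrow> real" where
  "omega p = 2 * pi powr ((real p + 1) / 2) / Gamma ((real p + 1) / 2)"

definition sdim :: "nat \<Rightarrow> nat \<Rightarrow> nat" where
  "sdim p d = (p + d) choose d"

definition hausdorff_dist :: "('a::metric_space) set \<Rightarrow> 'a set \<Rightarrow> ereal" where
  "hausdorff_dist X Y = max (SUP x\<in>X. INF y\<in>Y. ereal (dist x y)) (SUP y\<in>Y. INF x\<in>X. ereal (dist x y))"

definition alpha_thr :: "nat \<Rightarrow> real \<Rightarrow> real \<Rightarrow> nat \<Rightarrow> real" where
  "alpha_thr p \<delta> volS d = (\<delta> ^ p * omega p / volS) *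
     ((real d + 1) * (real d + 2) * (real d + 3) /
      ((real d + real p + 1) * (real d + real p + 2) * (2 * real d + real p + 6)))"

definition deg_cond :: "nat \<Rightarrow> real \<Rightarrow> real \<Rightarrow> real \<Rightarrow> nat \<Rightarrow> bool" where
  "deg_cond p \<delta> diamS volS d \<longleftrightarrow>
     2 powr (3 - \<delta> * real d / (\<delta> + diamS)) * real d ^ p * (exp 1 / real p) ^ p
       * exp (real p ^ 2 / real d) \<le> alpha_thr p \<delta> volS d"

end

theory Submission
  imports Defs
begin

text \<open>
  If the cube of half-width \<open>a\<close> around \<open>x\<close> lies in \<open>S\<close>, then
  \<open>\<Lambda>(x) \<ge> (a / (d + 2)) ^ p / \<lambda>(S)\<close>: a product of one-dimensional kernels supported on the cube
  reproduces the value at \<open>x\<close> of every polynomial of degree \<open>\<le> d\<close> and has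
  \<open>L\<^sup>2\<close>-norm squared at most \<open>((d + 2) / a) ^ p\<close>, so Cauchy--Schwarz bounds \<open>\<integral> P\<^sup>2\<close> from below.
  If \<open>x\<close> has distance \<open>\<ge> r\<close> from \<open>S\<close>, the needle polynomial \<open>(1 - |y - x|\<^sup>2 / R) ^ (d div 2)\<close>
  equals \<open>1\<close> at \<open>x\<close> and is at most \<open>exp (- 2 r\<^sup>2 / (5 diam(S)\<^sup>2)) ^ (d - 1)\<close> on \<open>S\<close>.
  For \<open>a\<close> proportional to \<open>\<delta>\<^sub>k\<close> and \<open>r = sqrt (5 diam(S) \<delta>\<^sub>k)\<close>, the defining inequality of \<open>d\<^sub>k\<close>
  places \<open>\<alpha>\<^sub>k\<close> between the two bounds once \<open>\<delta>\<^sub>k\<close> is small. Hence \<open>S\<^sub>k\<close> contains every point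
  having a ball of radius \<open>O(\<delta>\<^sub>k)\<close> inside \<open>S\<close> and lies in the \<open>r\<^sub>k\<close>-neighbourhood of \<open>S\<close>.
  Because \<open>S\<close> is the closure of its interior, compactness gives uniform inner and outer balls near
  \<open>S\<close> and near its boundary, and such sandwiched sets converge to \<open>S\<close> in Hausdorff distance,
  together with their boundaries.
\<close>

section \<open>Polynomials of bounded degree\<close>

definition cart_monomial :: "('p::finite \<Rightarrow> nat) \<Rightarrow> real^'p \<Rightarrow> real" where
  "cart_monomial \<alpha> x = (\<Prod>i\<in>UNIV. (x $ i) ^ (\<alpha> i))"

lemma multi_indices_component_le: "\<alpha> \<in> multi_indices d \<Longrightarrow> \<alpha> i \<le> d"
  using member_le_sum[of i UNIV \<alpha>] by (auto simp: multi_indices_def)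

lemma finite_multi_indices: "finite (multi_indices d :: ('p::finite \<Rightarrow> nat) set)"
proof (rule finite_subset)
  show "multi_indices d \<subseteq> Pi\<^sub>E (UNIV::'p set) (\<lambda>_. {0..d})"
    by (auto simp: PiE_def extensional_def multi_indices_component_le)
qed (simp add: finite_PiE)

lemma poly_deg_le_iff:
  "f \<in> poly_deg_le d \<longleftrightarrow> (\<exists>c. f = (\<lambda>x. \<Sum>\<alpha>\<in>multi_indices d. c \<alpha> * cart_monomial \<alpha> x))"
  by (simp add: poly_deg_le_def cart_monomial_def)

lemma poly_deg_leI:
  "f = (\<lambda>x. \<Sum>\<alpha>\<in>multi_indices d. c \<alpha> * cart_monomial \<alpha> x) \<Longrightarrow> f \<in> poly_deg_le d"
  unfolding poly_deg_le_iff by (rule exI)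

lemma poly_deg_leE:
  assumes "f \<in> poly_deg_le d"
  obtains c where "f = (\<lambda>x. \<Sum>\<alpha>\<in>multi_indices d. c \<alpha> * cart_monomial \<alpha> x)"
  using assms unfolding poly_deg_le_iff by (elim exE)

lemma poly_deg_le_mono:
  assumes "f \<in> poly_deg_le d" "d \<le> e"
  shows "f \<in> poly_deg_le e"
proof -
  obtain c where f: "f = (\<lambda>x. \<Sum>\<alpha>\<in>multi_indices d. c \<alpha> * cart_monomial \<alpha> x)"
    using assms(1) by (rule poly_deg_leE)
  define c' where "c' \<alpha> = (if \<alpha> \<in> multi_indices d then c \<alpha> else 0)" for \<alpha>
  have sub: "multi_indices d \<subseteq> multi_indices e"
    using assms(2) by (auto simp: multi_indices_def)
  have "f x = (\<Sum>\<alpha>\<in>multi_indices e. c' \<alpha> * cart_monomial \<alpha> x)" for x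
    unfolding f c'_def
    by (rule sum.mono_neutral_cong_left[OF finite_multi_indices sub]) auto
  then show ?thesis by (intro poly_deg_leI) auto
qed

lemma poly_deg_le_const: "(\<lambda>_. c) \<in> poly_deg_le d"
proof (rule poly_deg_leI)
  have zero: "(\<lambda>_. 0) \<in> multi_indices d" by (simp add: multi_indices_def)
  show "(\<lambda>_. c) = (\<lambda>x. \<Sum>\<alpha>\<in>multi_indices d. (if \<alpha> = (\<lambda>_. 0) then c else 0) * cart_monomial \<alpha> x)"
    using zero by (auto simp: if_distrib[of "\<lambda>u. u * _"] finite_multi_indices cart_monomial_def
        cong: if_cong)
qed

lemma poly_deg_le_add:
  assumes "f \<in> poly_deg_le d" "g \<in> poly_deg_le d"
  shows "(\<lambda>x. f x + g x) \<in> poly_deg_le d"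
proof -
  obtain c where f: "f = (\<lambda>x. \<Sum>\<alpha>\<in>multi_indices d. c \<alpha> * cart_monomial \<alpha> x)"
    using assms(1) by (rule poly_deg_leE)
  obtain c' where g: "g = (\<lambda>x. \<Sum>\<alpha>\<in>multi_indices d. c' \<alpha> * cart_monomial \<alpha> x)"
    using assms(2) by (rule poly_deg_leE)
  show ?thesis
    by (rule poly_deg_leI[where c = "\<lambda>\<alpha>. c \<alpha> + c' \<alpha>"])
       (simp add: f g sum.distrib[symmetric] algebra_simps)
qed

lemma poly_deg_le_cmult:
  assumes "f \<in> poly_deg_le d"
  shows "(\<lambda>x. a * f x) \<in> poly_deg_le d"
proof -
  obtain c where f: "f = (\<lambda>x. \<Sum>\<alpha>\<in>multi_indices d. c \<alpha> * cart_monomial \<alpha> x)"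
    using assms by (rule poly_deg_leE)
  show ?thesis
    by (rule poly_deg_leI[where c = "\<lambda>\<alpha>. a * c \<alpha>"]) (simp add: f sum_distrib_left algebra_simps)
qed

lemma poly_deg_le_diff:
  "f \<in> poly_deg_le d \<Longrightarrow> g \<in> poly_deg_le d \<Longrightarrow> (\<lambda>x. f x - g x) \<in> poly_deg_le d"
  using poly_deg_le_add[OF _ poly_deg_le_cmult, of f d g "-1"] by simp

lemma poly_deg_le_sum:
  assumes "finite I" "\<And>i. i \<in> I \<Longrightarrow> f i \<in> poly_deg_le d"
  shows "(\<lambda>x. \<Sum>i\<in>I. f i x) \<in> poly_deg_le d"
  using assms
proof (induction I rule: finite_induct)
  case empty
  show ?case using poly_deg_le_const[of 0] by simp
next
  case (insert a F)
  then show ?case using poly_deg_le_add[of "f a" d "\<lambda>x. \<Sum>i\<in>F. f i x"] by simp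
qed

lemma cart_monomial_raise:
  "cart_monomial (\<alpha>(i := Suc (\<alpha> i))) x = x $ i * cart_monomial \<alpha> x"
proof -
  have "cart_monomial (\<alpha>(i := Suc (\<alpha> i))) x = (x $ i) ^ Suc (\<alpha> i) * (\<Prod>j\<in>UNIV - {i}. (x $ j) ^ \<alpha> j)"
    by (simp add: cart_monomial_def prod.remove[of UNIV i])
  also have "\<dots> = x $ i * cart_monomial \<alpha> x"
    by (simp add: cart_monomial_def prod.remove[of UNIV i])
  finally show ?thesis .
qed

lemma sum_raise_component:
  fixes \<alpha> :: "'p::finite \<Rightarrow> nat"
  shows "sum (\<alpha>(i := Suc (\<alpha> i))) UNIV = Suc (sum \<alpha> UNIV)"
  by (simp add: sum.remove[of UNIV i])

lemma poly_deg_le_mult_component: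
  assumes "f \<in> poly_deg_le d"
  shows "(\<lambda>x. x $ i * f x) \<in> poly_deg_le (Suc d)"
proof -
  obtain c where f: "f = (\<lambda>x. \<Sum>\<alpha>\<in>multi_indices d. c \<alpha> * cart_monomial \<alpha> x)"
    using assms by (rule poly_deg_leE)
  define raise :: "('a \<Rightarrow> nat) \<Rightarrow> ('a \<Rightarrow> nat)" where "raise \<alpha> = \<alpha>(i := Suc (\<alpha> i))" for \<alpha>
  define lower :: "('a \<Rightarrow> nat) \<Rightarrow> ('a \<Rightarrow> nat)" where "lower \<beta> = \<beta>(i := \<beta> i - 1)" for \<beta>
  have lower_raise: "lower (raise \<alpha>) = \<alpha>" for \<alpha> by (auto simp: lower_def raise_def)
  then have inj: "inj_on raise (multi_indices d)" by (metis inj_onI)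
  have sub: "raise ` multi_indices d \<subseteq> multi_indices (Suc d)"
    unfolding raise_def by (auto simp only: multi_indices_def mem_Collect_eq sum_raise_component)
  define c' where "c' \<beta> = (if \<beta> \<in> raise ` multi_indices d then c (lower \<beta>) else 0)" for \<beta>
  have "x $ i * f x = (\<Sum>\<beta>\<in>multi_indices (Suc d). c' \<beta> * cart_monomial \<beta> x)" for x
  proof -
    have "x $ i * f x = (\<Sum>\<alpha>\<in>multi_indices d. c \<alpha> * cart_monomial (raise \<alpha>) x)"
      by (simp add: f raise_def cart_monomial_raise sum_distrib_left algebra_simps)
    also have "\<dots> = (\<Sum>\<beta>\<in>raise ` multi_indices d. c' \<beta> * cart_monomial \<beta> x)"
      by (simp add: sum.reindex[OF inj] c'_def lower_raise)
    also have "\<dots> = (\<Sum>\<beta>\<in>multi_indices (Suc d). c' \<beta> * cart_monomial \<beta> x)"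
      by (rule sum.mono_neutral_left[OF finite_multi_indices sub]) (auto simp: c'_def)
    finally show ?thesis .
  qed
  then show ?thesis by (intro poly_deg_leI) auto
qed

lemma poly_deg_le_mult_affine_component:
  assumes "f \<in> poly_deg_le d"
  shows "(\<lambda>x. (x $ i - a) * f x) \<in> poly_deg_le (Suc d)"
proof -
  have "(\<lambda>x. x $ i * f x - a * f x) \<in> poly_deg_le (Suc d)"
    by (intro poly_deg_le_diff poly_deg_le_mult_component poly_deg_le_cmult
        poly_deg_le_mono[OF assms]) auto
  then show ?thesis by (simp add: algebra_simps)
qed

lemma continuous_on_poly_deg_le:
  assumes "f \<in> poly_deg_le d"
  shows "continuous_on A f"
proof -
  obtain c where f: "f = (\<lambda>x. \<Sum>\<alpha>\<in>multi_indices d. c \<alpha> * cart_monomial \<alpha> x)"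
    using assms by (rule poly_deg_leE)
  show ?thesis unfolding f cart_monomial_def by (intro continuous_intros)
qed

definition needle_factor :: "real^'p::finite \<Rightarrow> real \<Rightarrow> real^'p \<Rightarrow> real" where
  "needle_factor x R y = 1 - (\<Sum>i\<in>UNIV. (y $ i - x $ i) * (y $ i - x $ i)) / R"

lemma needle_factor_eq: "needle_factor x R y = 1 - (dist x y)\<^sup>2 / R"
proof -
  have "(dist x y)\<^sup>2 = (\<Sum>i\<in>UNIV. (x $ i - y $ i) * (x $ i - y $ i))"
    by (simp add: dist_norm power2_norm_eq_inner inner_vec_def)
  then show ?thesis by (simp add: needle_factor_def algebra_simps)
qed

lemma poly_deg_le_needle_factor_mult:
  assumes "f \<in> poly_deg_le d"
  shows "(\<lambda>y. needle_factor x R y * f y) \<in> poly_deg_le (Suc (Suc d))"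
proof -
  have "(\<lambda>y. f y - (1/R) * (\<Sum>i\<in>UNIV. (y $ i - x $ i) * ((y $ i - x $ i) * f y)))
          \<in> poly_deg_le (Suc (Suc d))"
    by (intro poly_deg_le_diff poly_deg_le_cmult poly_deg_le_sum poly_deg_le_mult_affine_component
        poly_deg_le_mono[OF assms]) auto
  moreover have "(\<Sum>i\<in>UNIV. (y $ i - x $ i) * ((y $ i - x $ i) * f y))
      = (\<Sum>i\<in>UNIV. (y $ i - x $ i) * (y $ i - x $ i)) * f y" for y
    by (simp add: sum_distrib_right mult.assoc)
  ultimately show ?thesis by (simp add: needle_factor_def algebra_simps)
qed

lemma poly_deg_le_needle_factor_power: "(\<lambda>y. needle_factor x R y ^ n) \<in> poly_deg_le (2 * n)"
proof (induction n)
  case 0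
  show ?case using poly_deg_le_const[of 1] by simp
next
  case (Suc n)
  show ?case using poly_deg_le_needle_factor_mult[OF Suc, of x R] by simp
qed

section \<open>Sine polynomials and a reproducing kernel on [0, pi]\<close>

definition sine_poly :: "nat \<Rightarrow> (real \<Rightarrow> real) set" where
  "sine_poly N = {g. \<exists>b. g = (\<lambda>\<theta>. \<Sum>k\<le>N. b k * sin (real k * \<theta>))}"

lemma sine_polyI: "g = (\<lambda>\<theta>. \<Sum>k\<le>N. b k * sin (real k * \<theta>)) \<Longrightarrow> g \<in> sine_poly N"
  unfolding sine_poly_def by blast

lemma sine_polyE:
  assumes "g \<in> sine_poly N"
  obtains b where "g = (\<lambda>\<theta>. \<Sum>k\<le>N. b k * sin (real k * \<theta>))"
  using assms unfolding sine_poly_def by blast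

lemma sine_poly_add:
  assumes "f \<in> sine_poly N" "g \<in> sine_poly N"
  shows "(\<lambda>x. f x + g x) \<in> sine_poly N"
proof -
  obtain b where b: "f = (\<lambda>\<theta>. \<Sum>k\<le>N. b k * sin (real k * \<theta>))"
    using assms(1) by (rule sine_polyE)
  obtain b' where b': "g = (\<lambda>\<theta>. \<Sum>k\<le>N. b' k * sin (real k * \<theta>))"
    using assms(2) by (rule sine_polyE)
  show ?thesis
    by (rule sine_polyI[where b = "\<lambda>k. b k + b' k"]) (simp add: b b' sum.distrib[symmetric] algebra_simps)
qed

lemma sine_poly_cmult:
  assumes "f \<in> sine_poly N"
  shows "(\<lambda>x. a * f x) \<in> sine_poly N"
proof -
  obtain b where b: "f = (\<lambda>\<theta>. \<Sum>k\<le>N. b k * sin (real k * \<theta>))"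
    using assms by (rule sine_polyE)
  show ?thesis
    by (rule sine_polyI[where b = "\<lambda>k. a * b k"]) (simp add: b sum_distrib_left mult.assoc)
qed

lemma sine_poly_sum:
  assumes "finite I" "\<And>i. i \<in> I \<Longrightarrow> f i \<in> sine_poly N"
  shows "(\<lambda>x. \<Sum>i\<in>I. f i x) \<in> sine_poly N"
  using assms
proof (induction I rule: finite_induct)
  case empty
  show ?case by (rule sine_polyI[where b = "\<lambda>_. 0"]) simp
next
  case (insert a F)
  then show ?case using sine_poly_add[of "f a" N "\<lambda>x. \<Sum>i\<in>F. f i x"] by simp
qed

lemma sine_poly_sin: "k \<le> N \<Longrightarrow> (\<lambda>\<theta>. sin (real k * \<theta>)) \<in> sine_poly N"
  by (rule sine_polyI[where b = "\<lambda>j. if j = k then 1 else 0"])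
     (simp add: if_distrib[of "\<lambda>u. u * _"] cong: if_cong)

lemma sine_poly_mono:
  assumes "f \<in> sine_poly N" "N \<le> M"
  shows "f \<in> sine_poly M"
proof -
  obtain b where b: "f = (\<lambda>\<theta>. \<Sum>k\<le>N. b k * sin (real k * \<theta>))"
    using assms(1) by (rule sine_polyE)
  show ?thesis unfolding b
    by (intro sine_poly_sum sine_poly_cmult sine_poly_sin) (use assms(2) in auto)
qed

lemma sine_poly_cos_mult_sin:
  assumes "k \<le> N"
  shows "(\<lambda>\<theta>. cos \<theta> * sin (real k * \<theta>)) \<in> sine_poly (Suc N)"
proof (cases k)
  case 0
  then show ?thesis by (simp add: sine_polyI[where b = "\<lambda>_. 0"])
next
  case (Suc m)
  have "cos \<theta> * sin (real k * \<theta>) = 1/2 * sin (real (Suc k) * \<theta>) + 1/2 * sin (real m * \<theta>)" for \<theta>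
    using sin_times_cos[of "real k * \<theta>" \<theta>] Suc by (simp add: algebra_simps)
  moreover have "(\<lambda>\<theta>. 1/2 * sin (real (Suc k) * \<theta>) + 1/2 * sin (real m * \<theta>)) \<in> sine_poly (Suc N)"
    by (intro sine_poly_add sine_poly_cmult sine_poly_sin) (use assms Suc in auto)
  ultimately show ?thesis by simp
qed

lemma sine_poly_cos_mult:
  assumes "f \<in> sine_poly N"
  shows "(\<lambda>\<theta>. cos \<theta> * f \<theta>) \<in> sine_poly (Suc N)"
proof -
  obtain b where b: "f = (\<lambda>\<theta>. \<Sum>k\<le>N. b k * sin (real k * \<theta>))"
    using assms by (rule sine_polyE)
  have "(\<lambda>\<theta>. \<Sum>k\<le>N. b k * (cos \<theta> * sin (real k * \<theta>))) \<in> sine_poly (Suc N)"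
    by (intro sine_poly_sum sine_poly_cmult sine_poly_cos_mult_sin) auto
  then show ?thesis by (simp add: b sum_distrib_left algebra_simps)
qed

lemma sine_poly_cos_power_mult_sin: "(\<lambda>\<theta>. cos \<theta> ^ j * sin \<theta>) \<in> sine_poly (Suc j)"
proof (induction j)
  case 0
  show ?case using sine_poly_sin[of 1 1] by simp
next
  case (Suc j)
  show ?case using sine_poly_cos_mult[OF Suc] by (simp add: mult.assoc)
qed

lemma sine_poly_affine_cos_power_mult_sin:
  "(\<lambda>\<theta>. (c - a * cos \<theta>) ^ j * sin \<theta>) \<in> sine_poly (Suc j)"
proof -
  have "(c - a * cos \<theta>) ^ j * sin \<theta>
      = (\<Sum>m\<le>j. (real (j choose m) * (- a) ^ m * c ^ (j - m)) * (cos \<theta> ^ m * sin \<theta>))" for \<theta>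
  proof -
    have "(c - a * cos \<theta>) ^ j = (\<Sum>m\<le>j. of_nat (j choose m) * ((- a) * cos \<theta>) ^ m * c ^ (j - m))"
      using binomial_ring[of "(- a) * cos \<theta>" c j] by simp
    also have "\<dots> = (\<Sum>m\<le>j. (real (j choose m) * (- a) ^ m * c ^ (j - m)) * cos \<theta> ^ m)"
      by (rule sum.cong) (auto simp: power_mult_distrib[symmetric])
    finally show ?thesis
      by (simp add: sum_distrib_right mult.assoc)
  qed
  moreover have "(\<lambda>\<theta>. \<Sum>m\<le>j. (real (j choose m) * (- a) ^ m * c ^ (j - m)) * (cos \<theta> ^ m * sin \<theta>))
      \<in> sine_poly (Suc j)"
    by (intro sine_poly_sum sine_poly_cmult sine_poly_mono[OF sine_poly_cos_power_mult_sin]) auto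
  ultimately show ?thesis by simp
qed

lemma has_integral_sin_mult_sin:
  fixes j k :: nat
  shows "((\<lambda>\<theta>. sin (real j * \<theta>) * sin (real k * \<theta>))
          has_integral (if j = k \<and> j \<noteq> 0 then pi/2 else 0)) {0..pi}"
proof (cases "j + k = 0")
  case True
  then show ?thesis by simp
next
  case False
  define u where "u = real j - real k"
  define v where "v = real j + real k"
  have v: "v \<noteq> 0" using False unfolding v_def by (metis of_nat_add of_nat_eq_0_iff)
  define F where "F \<theta> = (if j = k then \<theta>/2 else sin (u * \<theta>) / (2 * u)) - sin (v * \<theta>) / (2 * v)" for \<theta>
  have "((\<lambda>\<theta>. sin (real j * \<theta>) * sin (real k * \<theta>)) has_integral (F pi - F 0)) {0..pi}"
  proof (rule fundamental_theorem_of_calculus)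
    fix x
    have integrand: "(cos (u * x) - cos (v * x)) / 2 = sin (real j * x) * sin (real k * x)"
      using sin_times_sin[of "real j * x" "real k * x"] by (simp add: u_def v_def algebra_simps)
    have "(F has_real_derivative (cos (u * x) - cos (v * x)) / 2) (at x within {0..pi})"
    proof (cases "j = k")
      case True
      then show ?thesis unfolding F_def using v by (auto intro!: derivative_eq_intros simp: u_def)
    next
      case False
      then have "u \<noteq> 0" by (simp add: u_def)
      then show ?thesis unfolding F_def using v False
        by (auto intro!: derivative_eq_intros simp: field_simps)
    qed
    then show "(F has_vector_derivative sin (real j * x) * sin (real k * x)) (at x within {0..pi})"
      by (simp only: has_real_derivative_iff_has_vector_derivative integrand)
  qed simp
  moreover have "F pi - F 0 = (if j = k \<and> j \<noteq> 0 then pi/2 else 0)"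
    using sin_times_pi_eq_0[of u] sin_times_pi_eq_0[of v] False by (auto simp: F_def u_def v_def)
  ultimately show ?thesis by simp
qed

definition sine_kernel :: "nat \<Rightarrow> real \<Rightarrow> real" where
  "sine_kernel n \<theta> = (\<Sum>l\<le>n. sin (real l * pi / 2) * sin (real l * \<theta>))"

lemma continuous_on_sine_kernel [continuous_intros]:
  fixes f :: "real \<Rightarrow> real"
  assumes "continuous_on A f"
  shows "continuous_on A (\<lambda>x. sine_kernel n (f x))"
  unfolding sine_kernel_def by (intro continuous_intros assms)

lemma sine_kernel_in_sine_poly: "sine_kernel n \<in> sine_poly n"
  by (rule sine_polyI[where b = "\<lambda>l. sin (real l * pi / 2)"]) (simp add: sine_kernel_def fun_eq_iff)

lemma has_integral_sine_poly_mult_sine_kernel: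
  assumes "g \<in> sine_poly N" "N \<le> n"
  shows "((\<lambda>\<theta>. g \<theta> * sine_kernel n \<theta>) has_integral (pi/2 * g (pi/2))) {0..pi}"
proof -
  obtain b where b: "g = (\<lambda>\<theta>. \<Sum>k\<le>N. b k * sin (real k * \<theta>))"
    using assms(1) by (rule sine_polyE)
  define c where "c l = sin (real l * pi / 2)" for l :: nat
  have expand: "(\<lambda>\<theta>. g \<theta> * sine_kernel n \<theta>)
      = (\<lambda>\<theta>. \<Sum>k\<le>N. \<Sum>l\<le>n. (b k * c l) * (sin (real k * \<theta>) * sin (real l * \<theta>)))"
    unfolding b sine_kernel_def c_def sum_product by (simp add: mult_ac)
  have integral: "((\<lambda>\<theta>. \<Sum>k\<le>N. \<Sum>l\<le>n. (b k * c l) * (sin (real k * \<theta>) * sin (real l * \<theta>)))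
      has_integral (\<Sum>k\<le>N. \<Sum>l\<le>n. (b k * c l) * (if k = l \<and> k \<noteq> 0 then pi/2 else 0))) {0..pi}"
    by (intro has_integral_sum has_integral_mult_right has_integral_sin_mult_sin) auto
  have result: "(\<Sum>k\<le>N. \<Sum>l\<le>n. (b k * c l) * (if k = l \<and> k \<noteq> 0 then pi/2 else 0)) = pi/2 * g (pi/2)"
  proof -
    have "(b k * c l) * (if k = l \<and> k \<noteq> 0 then pi/2 else 0) = (if l = k then b k * c k * pi/2 else 0)"
      for k l
      by (cases "k = 0") (auto simp: c_def)
    then have "(\<Sum>k\<le>N. \<Sum>l\<le>n. (b k * c l) * (if k = l \<and> k \<noteq> 0 then pi/2 else 0))
        = (\<Sum>k\<le>N. b k * c k * pi/2)"
      using assms(2) by (simp add: sum.delta')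
    also have "\<dots> = pi/2 * g (pi/2)"
      by (simp add: b c_def sum_distrib_left algebra_simps)
    finally show ?thesis .
  qed
  show ?thesis using integral unfolding expand result .
qed

lemma sine_kernel_pi_half_le: "sine_kernel n (pi/2) \<le> real n + 1"
proof -
  have "sine_kernel n (pi/2) = (\<Sum>l\<le>n. (sin (real l * pi / 2))\<^sup>2)"
    by (simp add: sine_kernel_def power2_eq_square mult.assoc)
  also have "\<dots> \<le> (\<Sum>l\<le>n. 1)"
    by (intro sum_mono) (simp add: abs_square_le_1)
  finally show ?thesis by simp
qed

section \<open>A one-dimensional kernel reproducing polynomials\<close>

text \<open>The substitution \<open>t = c - a cos \<theta>\<close> turns the moment \<open>\<integral> t ^ j * interval_kernel d c a t\<close>
  into the integral of a sine polynomial of degree \<open>j + 1 \<le> Suc d\<close> against \<open>sine_kernel (Suc d)\<close>,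
  which evaluates it at \<open>\<theta> = pi/2\<close>, i.e.\ at \<open>t = c\<close>.\<close>

definition kernel_profile :: "nat \<Rightarrow> real \<Rightarrow> real \<Rightarrow> real \<Rightarrow> real" where
  "kernel_profile d c a t = 2 / (pi * a) * sine_kernel (Suc d) (arccos ((c - t) / a))"

definition interval_kernel :: "nat \<Rightarrow> real \<Rightarrow> real \<Rightarrow> real \<Rightarrow> real" where
  "interval_kernel d c a t = indicator {c - a..c + a} t * kernel_profile d c a t"

lemma interval_kernel_outside: "t \<notin> {c - a..c + a} \<Longrightarrow> interval_kernel d c a t = 0"
  by (simp add: interval_kernel_def)

lemma continuous_on_kernel_profile:
  assumes "a > 0"
  shows "continuous_on {c - a..c + a} (kernel_profile d c a)"
proof -
  have "\<forall>t\<in>{c - a..c + a}. - 1 \<le> (c - t) / a \<and> (c - t) / a \<le> 1"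
    using assms by (auto simp: field_simps)
  then show ?thesis unfolding kernel_profile_def by (intro continuous_intros) (use assms in auto)
qed

lemma kernel_profile_cos:
  "a > 0 \<Longrightarrow> \<theta> \<in> {0..pi} \<Longrightarrow> kernel_profile d c a (c - a * cos \<theta>) = 2 / (pi * a) * sine_kernel (Suc d) \<theta>"
  by (simp add: kernel_profile_def arccos_cos)

lemma integral_cos_substitution:
  assumes "a > 0" "continuous_on {c - a..c + a} f"
  shows "integral {c - a..c + a} f = integral {0..pi} (\<lambda>\<theta>. a * sin \<theta> * f (c - a * cos \<theta>))"
proof -
  have "((\<lambda>\<theta>. (a * sin \<theta>) *\<^sub>R f (c - a * cos \<theta>)) has_integral
       integral {c - a * cos 0..c - a * cos pi} f) {0..pi}"
  proof (rule has_integral_substitution[where c = "c - a" and d = "c + a"])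
    show "(\<lambda>\<theta>. c - a * cos \<theta>) ` {0..pi} \<subseteq> {c - a..c + a}"
    proof clarify
      fix \<theta>
      have "\<bar>a * cos \<theta>\<bar> \<le> a" using assms(1) abs_cos_le_one[of \<theta>] by (simp add: abs_mult)
      then show "c - a * cos \<theta> \<in> {c - a..c + a}" by (auto simp: abs_le_iff)
    qed
    show "((\<lambda>\<theta>. c - a * cos \<theta>) has_real_derivative a * sin x) (at x within {0..pi})" for x
      by (auto intro!: derivative_eq_intros)
  qed (use assms in auto)
  then show ?thesis by (simp add: integral_unique)
qed

lemma
  assumes "a > 0" "continuous_on {c - a..c + a} g"
  shows integrable_mult_interval_kernel: "integrable lborel (\<lambda>t. g t * interval_kernel d c a t)"
    and integral_mult_interval_kernel:
      "(\<integral>t. g t * interval_kernel d c a t \<partial>lborel) = integral {c - a..c + a} (\<lambda>t. g t * kernel_profile d c a t)"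
proof -
  have "continuous_on {c - a..c + a} (\<lambda>t. g t * kernel_profile d c a t)"
    using assms continuous_on_kernel_profile[OF assms(1)] by (intro continuous_intros)
  then have int: "set_integrable lborel {c - a..c + a} (\<lambda>t. g t * kernel_profile d c a t)"
    by (rule borel_integrable_atLeastAtMost')
  have eq: "(\<lambda>t. g t * interval_kernel d c a t)
      = (\<lambda>t. indicator {c - a..c + a} t *\<^sub>R (g t * kernel_profile d c a t))"
    by (auto simp: interval_kernel_def fun_eq_iff)
  show "integrable lborel (\<lambda>t. g t * interval_kernel d c a t)"
    using int unfolding set_integrable_def eq .
  show "(\<integral>t. g t * interval_kernel d c a t \<partial>lborel) = integral {c - a..c + a} (\<lambda>t. g t * kernel_profile d c a t)"
    using set_borel_integral_eq_integral(2)[OF int] unfolding set_lebesgue_integral_def eq .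
qed

lemma integral_power_mult_interval_kernel:
  assumes "a > 0" "j \<le> d"
  shows "(\<integral>t. t ^ j * interval_kernel d c a t \<partial>lborel) = c ^ j"
proof -
  have cont: "continuous_on {c - a..c + a} (\<lambda>t. t ^ j)" by (intro continuous_intros)
  have "(\<integral>t. t ^ j * interval_kernel d c a t \<partial>lborel)
      = integral {0..pi} (\<lambda>\<theta>. a * sin \<theta> * ((c - a * cos \<theta>) ^ j * kernel_profile d c a (c - a * cos \<theta>)))"
    unfolding integral_mult_interval_kernel[OF assms(1) cont]
    by (rule integral_cos_substitution[OF assms(1)])
       (use cont continuous_on_kernel_profile[OF assms(1)] in \<open>intro continuous_intros\<close>)
  also have "\<dots> = integral {0..pi} (\<lambda>\<theta>. 2 / pi * (((c - a * cos \<theta>) ^ j * sin \<theta>) * sine_kernel (Suc d) \<theta>))"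
    using assms(1) by (intro integral_cong) (simp add: kernel_profile_cos)
  also have "\<dots> = 2 / pi * (pi / 2 * ((c - a * cos (pi/2)) ^ j * sin (pi/2)))"
    using has_integral_sine_poly_mult_sine_kernel[OF sine_poly_affine_cos_power_mult_sin[of c a j], of "Suc d"] assms(2)
    by (simp add: integral_unique)
  finally show ?thesis by simp
qed

lemma
  assumes "a > 0"
  shows integrable_interval_kernel_square:
      "integrable lborel (\<lambda>t. interval_kernel d c a t * interval_kernel d c a t)"
    and integral_interval_kernel_square_le:
      "(\<integral>t. interval_kernel d c a t * interval_kernel d c a t \<partial>lborel) \<le> (real d + 2) / a"
proof -
  let ?D = "sine_kernel (Suc d)"
  have cont: "continuous_on {c - a..c + a} (kernel_profile d c a)"
    by (rule continuous_on_kernel_profile[OF assms])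
  have eq: "(\<lambda>t. interval_kernel d c a t * interval_kernel d c a t)
      = (\<lambda>t. kernel_profile d c a t * interval_kernel d c a t)"
    by (auto simp: interval_kernel_def fun_eq_iff indicator_def)
  show "integrable lborel (\<lambda>t. interval_kernel d c a t * interval_kernel d c a t)"
    unfolding eq by (rule integrable_mult_interval_kernel[OF assms cont])
  have "(\<integral>t. interval_kernel d c a t * interval_kernel d c a t \<partial>lborel)
      = integral {0..pi} (\<lambda>\<theta>. a * sin \<theta> * (kernel_profile d c a (c - a * cos \<theta>) * kernel_profile d c a (c - a * cos \<theta>)))"
    unfolding eq integral_mult_interval_kernel[OF assms cont]
    by (rule integral_cos_substitution[OF assms]) (use cont in \<open>intro continuous_intros\<close>)
  also have "\<dots> = 4 / (pi * pi * a) * integral {0..pi} (\<lambda>\<theta>. sin \<theta> * (?D \<theta> * ?D \<theta>))"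
    using assms by (subst integral_mult_right[symmetric], intro integral_cong)
                   (simp add: kernel_profile_cos field_simps)
  also have "\<dots> \<le> 4 / (pi * pi * a) * integral {0..pi} (\<lambda>\<theta>. ?D \<theta> * ?D \<theta>)"
  proof (intro mult_left_mono integral_le)
    show "sin \<theta> * (?D \<theta> * ?D \<theta>) \<le> ?D \<theta> * ?D \<theta>" for \<theta>
      using mult_right_mono[OF sin_le_one[of \<theta>] zero_le_square[of "?D \<theta>"]] by simp
  qed (use assms in \<open>auto intro!: integrable_continuous_real continuous_intros\<close>)
  also have "\<dots> = 4 / (pi * pi * a) * (pi / 2 * ?D (pi/2))"
    by (simp add: integral_unique[OF has_integral_sine_poly_mult_sine_kernel[OF sine_kernel_in_sine_poly order_refl]])
  also have "\<dots> \<le> 4 / (pi * pi * a) * (pi / 2 * (real d + 2))"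
    using sine_kernel_pi_half_le[of "Suc d"] assms by (intro mult_left_mono) auto
  also have "\<dots> = 2 / pi * ((real d + 2) / a)" using assms by (simp add: field_simps)
  also have "\<dots> \<le> (real d + 2) / a"
    using assms pi_gt3 by (intro mult_left_le_one_le) auto
  finally show "(\<integral>t. interval_kernel d c a t * interval_kernel d c a t \<partial>lborel) \<le> (real d + 2) / a" .
qed

lemma
  fixes f :: "'a::euclidean_space \<Rightarrow> real \<Rightarrow> real"
  assumes int: "\<And>b. b \<in> Basis \<Longrightarrow> integrable lborel (f b)"
  shows integrable_lborel_prod_Basis: "integrable (lborel::'a measure) (\<lambda>x. \<Prod>b\<in>Basis. f b (x \<bullet> b))"
    and integral_lborel_prod_Basis:
      "(\<integral>x. (\<Prod>b\<in>Basis. f b (x \<bullet> b)) \<partial>(lborel::'a measure)) = (\<Prod>b\<in>Basis. \<integral>t. f b t \<partial>lborel)"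
proof -
  interpret product_sigma_finite "\<lambda>_::'a. lborel::real measure"
    by (simp add: product_sigma_finite_def sigma_finite_lborel)
  have [measurable]: "(\<lambda>g. \<Sum>b\<in>Basis. g b *\<^sub>R b) \<in> measurable (\<Pi>\<^sub>M b\<in>Basis. (lborel::real measure)) (borel::'a measure)"
    by measurable
  have [measurable]: "f b \<in> borel_measurable borel" if "b \<in> Basis" for b
    using int[OF that] by (simp add: borel_measurable_integrable)
  have coords: "(\<lambda>g. \<Prod>b\<in>Basis. f b ((\<Sum>b'\<in>Basis. g b' *\<^sub>R b') \<bullet> b)) = (\<lambda>g. \<Prod>b\<in>Basis. f b (g b))"
    by (intro ext prod.cong) (auto simp: inner_sum_left inner_Basis if_distrib sum.delta cong: if_cong)
  show "integrable (lborel::'a measure) (\<lambda>x. \<Prod>b\<in>Basis. f b (x \<bullet> b))"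
    by (subst lborel_eq, subst integrable_distr_eq) (auto simp: coords intro!: product_integrable_prod int)
  show "(\<integral>x. (\<Prod>b\<in>Basis. f b (x \<bullet> b)) \<partial>(lborel::'a measure)) = (\<Prod>b\<in>Basis. \<integral>t. f b t \<partial>lborel)"
    by (subst lborel_eq, subst integral_distr) (auto simp: coords intro!: product_integral_prod int)
qed

lemma
  fixes f :: "'p::finite \<Rightarrow> real \<Rightarrow> real"
  assumes int: "\<And>i. integrable lborel (f i)"
  shows integrable_lborel_prod_cart: "integrable (lborel::(real^'p) measure) (\<lambda>x. \<Prod>i\<in>UNIV. f i (x $ i))"
    and integral_lborel_prod_cart:
      "(\<integral>x. (\<Prod>i\<in>UNIV. f i (x $ i)) \<partial>(lborel::(real^'p) measure)) = (\<Prod>i\<in>UNIV. \<integral>t. f i t \<partial>lborel)"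
proof -
  define ax where "ax i = (axis i 1 :: real^'p)" for i
  have inj: "inj ax" by (rule injI) (simp add: ax_def axis_eq_axis)
  have Basis: "(Basis :: (real^'p) set) = range ax" by (auto simp: Basis_vec_def ax_def)
  define g where "g b = f (inv ax b)" for b :: "real^'p"
  have g_ax: "g (ax i) = f i" for i by (simp add: g_def inv_f_f[OF inj])
  have g: "integrable lborel (g b)" for b unfolding g_def by (rule int)
  have prod_Basis: "(\<Prod>b\<in>Basis. h b) = (\<Prod>i\<in>UNIV. h (ax i))" for h :: "real^'p \<Rightarrow> real"
    unfolding Basis by (simp add: prod.reindex[OF inj])
  have coords: "(\<Prod>b\<in>Basis. g b (x \<bullet> b)) = (\<Prod>i\<in>UNIV. f i (x $ i))" for x :: "real^'p"
    unfolding prod_Basis g_ax by (simp add: ax_def cart_eq_inner_axis)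
  show "integrable (lborel::(real^'p) measure) (\<lambda>x. \<Prod>i\<in>UNIV. f i (x $ i))"
    using integrable_lborel_prod_Basis[of g, OF g] unfolding coords .
  show "(\<integral>x. (\<Prod>i\<in>UNIV. f i (x $ i)) \<partial>(lborel::(real^'p) measure)) = (\<Prod>i\<in>UNIV. \<integral>t. f i t \<partial>lborel)"
    using integral_lborel_prod_Basis[of g, OF g] unfolding coords prod_Basis g_ax .
qed

lemma Cauchy_Schwarz_integral:
  fixes u v :: "'a \<Rightarrow> real"
  assumes "integrable M (\<lambda>x. u x * u x)" "integrable M (\<lambda>x. v x * v x)" "integrable M (\<lambda>x. u x * v x)"
  shows "(\<integral>x. u x * v x \<partial>M)\<^sup>2 \<le> (\<integral>x. u x * u x \<partial>M) * (\<integral>x. v x * v x \<partial>M)"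
proof -
  define A where "A = (\<integral>x. u x * u x \<partial>M)"
  define B where "B = (\<integral>x. v x * v x \<partial>M)"
  define C where "C = (\<integral>x. u x * v x \<partial>M)"
  have quadratic: "0 \<le> A - 2 * t * C + t * t * B" for t
  proof -
    have "0 \<le> (\<integral>x. (u x - t * v x) * (u x - t * v x) \<partial>M)"
      by (rule integral_nonneg_AE) auto
    also have "(\<lambda>x. (u x - t * v x) * (u x - t * v x))
        = (\<lambda>x. u x * u x - (2 * t) * (u x * v x) + (t * t) * (v x * v x))"
      by (auto simp: fun_eq_iff algebra_simps)
    finally show ?thesis using assms by (simp add: A_def B_def C_def)
  qed
  show ?thesis
  proof (cases "B = 0")
    case True
    then have "C = 0"
      using quadratic[of "(A + 1) / (2 * C)"] by (cases "C = 0") (auto simp: field_simps)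
    then show ?thesis using True by (simp add: A_def B_def C_def[symmetric])
  next
    case False
    have "0 \<le> B" unfolding B_def by (rule integral_nonneg_AE) auto
    with False have "B > 0" by simp
    moreover have "0 \<le> A - 2 * (C / B) * C + (C / B) * (C / B) * B" by (rule quadratic)
    ultimately have "C * C \<le> A * B" by (simp add: field_simps)
    then show ?thesis by (simp add: A_def B_def C_def power2_eq_square)
  qed
qed

section \<open>Bounds on the Christoffel function\<close>

definition cube :: "real^'p::finite \<Rightarrow> real \<Rightarrow> (real^'p) set" where
  "cube x a = cbox (x - (\<chi> i. a)) (x + (\<chi> i. a))"

lemma mem_cube: "y \<in> cube x a \<longleftrightarrow> (\<forall>i. x $ i - a \<le> y $ i \<and> y $ i \<le> x $ i + a)"
  by (simp add: cube_def mem_box_cart)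

lemma compact_cube: "compact (cube x a)"
  by (simp add: cube_def)

lemma cube_subset_cball: "cube x a \<subseteq> cball x (real CARD('p) * a)" for x :: "real^'p::finite"
proof
  fix y assume y: "y \<in> cube x a"
  have "dist x y \<le> (\<Sum>i\<in>UNIV. \<bar>(x - y) $ i\<bar>)"
    unfolding dist_norm by (rule norm_le_l1_cart)
  also have "\<dots> \<le> (\<Sum>i\<in>(UNIV::'p set). a)"
  proof (rule sum_mono)
    fix i
    have "x $ i - a \<le> y $ i \<and> y $ i \<le> x $ i + a" using y by (simp add: mem_cube)
    then show "\<bar>(x - y) $ i\<bar> \<le> a" by (simp add: abs_le_iff)
  qed
  finally show "y \<in> cball x (real CARD('p) * a)" by simp
qed

lemma integrable_indicator_mult_continuous:
  fixes f :: "'a::euclidean_space \<Rightarrow> real"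
  assumes "compact K" "continuous_on K f"
  shows "integrable lborel (\<lambda>x. indicator K x * f x)"
  using borel_integrable_compact[OF assms] by simp

lemma integral_mu_S:
  fixes S :: "(real^'p::finite) set"
  assumes S: "compact S" and vol: "measure lborel S > 0" and f: "continuous_on UNIV f"
  shows "(\<integral>x. f x \<partial>mu_S S) = (\<integral>x. indicator S x * f x \<partial>lborel) / measure lborel S"
proof -
  have [measurable]: "S \<in> sets lborel" using S by (simp add: borel_compact)
  have [measurable]: "f \<in> borel_measurable lborel"
    using f by (simp add: borel_measurable_continuous_onI)
  have "emeasure lborel S = ennreal (measure lborel S)"
    using emeasure_bounded_finite[OF compact_imp_bounded[OF S]] by (simp add: emeasure_eq_ennreal_measure)
  then have density: "(\<lambda>x. indicator S x / emeasure lborel S) = (\<lambda>x. ennreal (indicator S x / measure lborel S))"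
    using vol divide_ennreal[of 1 "measure lborel S"] by (auto simp: fun_eq_iff indicator_def)
  have "(\<integral>x. f x \<partial>mu_S S) = (\<integral>x. (indicator S x / measure lborel S) *\<^sub>R f x \<partial>lborel)"
    unfolding mu_S_def uniform_measure_def density by (rule integral_density) auto
  also have "\<dots> = (\<integral>x. indicator S x * f x / measure lborel S \<partial>lborel)"
    by simp
  finally show ?thesis by (simp only: integral_divide_zero)
qed

lemma christoffel_le_integral:
  assumes "P \<in> poly_deg_le d" "P \<xi> = 1"
  shows "christoffel \<nu> d \<xi> \<le> (\<integral>x. (P x)\<^sup>2 \<partial>\<nu>)"
  unfolding christoffel_def
  by (rule cInf_lower) (use assms in \<open>auto intro!: bdd_belowI[of _ 0] integral_nonneg_AE\<close>)

lemma christoffel_geI: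
  assumes "\<And>P. P \<in> poly_deg_le d \<Longrightarrow> P \<xi> = 1 \<Longrightarrow> L \<le> (\<integral>x. (P x)\<^sup>2 \<partial>\<nu>)"
  shows "L \<le> christoffel \<nu> d \<xi>"
  unfolding christoffel_def
  by (rule cInf_greatest) (use assms poly_deg_le_const[of 1 d] in blast)+

lemma christoffel_nonneg: "0 \<le> christoffel \<nu> d \<xi>"
  by (rule christoffel_geI) (auto intro!: integral_nonneg_AE)

subsection \<open>Lower bound at points deep inside the support\<close>

definition cube_kernel :: "nat \<Rightarrow> real^'p::finite \<Rightarrow> real \<Rightarrow> real^'p \<Rightarrow> real" where
  "cube_kernel d x a y = (\<Prod>i\<in>UNIV. interval_kernel d (x $ i) a (y $ i))"

lemma cube_kernel_outside: "y \<notin> cube x a \<Longrightarrow> cube_kernel d x a y = 0"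
  unfolding cube_kernel_def by (auto simp: mem_cube intro!: prod_zero interval_kernel_outside)

lemma
  assumes "a > 0" "\<alpha> \<in> multi_indices d"
  shows integrable_monomial_mult_cube_kernel:
      "integrable lborel (\<lambda>y. cart_monomial \<alpha> y * cube_kernel d x a y)"
    and integral_monomial_mult_cube_kernel:
      "(\<integral>y. cart_monomial \<alpha> y * cube_kernel d x a y \<partial>lborel) = cart_monomial \<alpha> x"
proof -
  have eq: "(\<lambda>y. cart_monomial \<alpha> y * cube_kernel d x a y)
      = (\<lambda>y. \<Prod>i\<in>UNIV. (y $ i) ^ \<alpha> i * interval_kernel d (x $ i) a (y $ i))"
    by (simp add: cart_monomial_def cube_kernel_def prod.distrib fun_eq_iff)
  have int: "integrable lborel (\<lambda>t. t ^ \<alpha> i * interval_kernel d (x $ i) a t)" for i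
    by (rule integrable_mult_interval_kernel[OF assms(1)]) (intro continuous_intros)
  show "integrable lborel (\<lambda>y. cart_monomial \<alpha> y * cube_kernel d x a y)"
    unfolding eq by (rule integrable_lborel_prod_cart[OF int])
  show "(\<integral>y. cart_monomial \<alpha> y * cube_kernel d x a y \<partial>lborel) = cart_monomial \<alpha> x"
    unfolding eq integral_lborel_prod_cart[OF int]
    by (simp add: integral_power_mult_interval_kernel[OF assms(1) multi_indices_component_le[OF assms(2)]]
        cart_monomial_def)
qed

lemma
  assumes "a > 0" "P \<in> poly_deg_le d"
  shows integrable_poly_mult_cube_kernel: "integrable lborel (\<lambda>y. P y * cube_kernel d x a y)"
    and integral_poly_mult_cube_kernel: "(\<integral>y. P y * cube_kernel d x a y \<partial>lborel) = P x"
proof -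
  obtain c where P: "P = (\<lambda>x. \<Sum>\<alpha>\<in>multi_indices d. c \<alpha> * cart_monomial \<alpha> x)"
    using assms(2) by (rule poly_deg_leE)
  have eq: "(\<lambda>y. P y * cube_kernel d x a y)
      = (\<lambda>y. \<Sum>\<alpha>\<in>multi_indices d. c \<alpha> * (cart_monomial \<alpha> y * cube_kernel d x a y))"
    by (simp add: P sum_distrib_right mult.assoc fun_eq_iff)
  show "integrable lborel (\<lambda>y. P y * cube_kernel d x a y)"
    unfolding eq
    by (auto intro!: integrable_sum integrable_mult_right integrable_monomial_mult_cube_kernel[OF assms(1)])
  show "(\<integral>y. P y * cube_kernel d x a y \<partial>lborel) = P x"
    unfolding eq
    by (subst Bochner_Integration.integral_sum)
       (auto intro!: integrable_mult_right integrable_monomial_mult_cube_kernel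
         simp: assms integral_monomial_mult_cube_kernel P)
qed

lemma
  fixes x :: "real^'p::finite"
  assumes "a > 0"
  shows integrable_cube_kernel_square: "integrable lborel (\<lambda>y. cube_kernel d x a y * cube_kernel d x a y)"
    and integral_cube_kernel_square_le:
      "(\<integral>y. cube_kernel d x a y * cube_kernel d x a y \<partial>lborel) \<le> ((real d + 2) / a) ^ CARD('p)"
proof -
  have eq: "(\<lambda>y. cube_kernel d x a y * cube_kernel d x a y)
      = (\<lambda>y. \<Prod>i\<in>UNIV. interval_kernel d (x $ i) a (y $ i) * interval_kernel d (x $ i) a (y $ i))"
    by (simp add: cube_kernel_def prod.distrib fun_eq_iff)
  note int = integrable_interval_kernel_square[OF assms]
  show "integrable lborel (\<lambda>y. cube_kernel d x a y * cube_kernel d x a y)"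
    unfolding eq by (rule integrable_lborel_prod_cart[OF int])
  have "(\<integral>y. cube_kernel d x a y * cube_kernel d x a y \<partial>lborel)
      \<le> (\<Prod>i\<in>(UNIV::'p set). (real d + 2) / a)"
    unfolding eq integral_lborel_prod_cart[OF int]
    by (intro prod_mono conjI integral_nonneg_AE integral_interval_kernel_square_le assms) auto
  then show "(\<integral>y. cube_kernel d x a y * cube_kernel d x a y \<partial>lborel) \<le> ((real d + 2) / a) ^ CARD('p)"
    by simp
qed

text \<open>Cauchy--Schwarz against the kernel, which reproduces the value \<open>P x = 1\<close>.\<close>

lemma integral_poly_square_on_cube_ge:
  fixes P :: "real^'p::finite \<Rightarrow> real"
  assumes P: "P \<in> poly_deg_le d" "P x = 1" and a: "a > 0"
  shows "(a / (real d + 2)) ^ CARD('p) \<le> (\<integral>y. indicator (cube x a) y * (P y * P y) \<partial>lborel)"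
proof -
  let ?G = "cube_kernel d x a"
  define u where "u y = indicator (cube x a) y * P y" for y
  have uG: "(\<lambda>y. u y * ?G y) = (\<lambda>y. P y * ?G y)"
    by (auto simp: u_def fun_eq_iff cube_kernel_outside indicator_def)
  have uu: "(\<lambda>y. u y * u y) = (\<lambda>y. indicator (cube x a) y * (P y * P y))"
    by (auto simp: u_def fun_eq_iff indicator_def)
  have int_uu: "integrable lborel (\<lambda>y. u y * u y)"
    unfolding uu using continuous_on_poly_deg_le[OF P(1)]
    by (intro integrable_indicator_mult_continuous compact_cube continuous_intros)
  have "1 = (\<integral>y. u y * ?G y \<partial>lborel)\<^sup>2"
    unfolding uG integral_poly_mult_cube_kernel[OF a P(1)] P(2) by simp
  also have "\<dots> \<le> (\<integral>y. u y * u y \<partial>lborel) * (\<integral>y. ?G y * ?G y \<partial>lborel)"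
    by (rule Cauchy_Schwarz_integral[OF int_uu integrable_cube_kernel_square[OF a]])
       (simp add: uG integrable_poly_mult_cube_kernel[OF a P(1)])
  also have "\<dots> \<le> (\<integral>y. u y * u y \<partial>lborel) * ((real d + 2) / a) ^ CARD('p)"
    by (intro mult_left_mono integral_cube_kernel_square_le a) (auto intro: integral_nonneg_AE)
  finally have "1 \<le> (\<integral>y. u y * u y \<partial>lborel) * ((real d + 2) / a) ^ CARD('p)" .
  with a show ?thesis
    unfolding uu by (simp add: power_divide divide_le_eq mult.commute)
qed

lemma christoffel_ge_cube:
  fixes S :: "(real^'p::finite) set"
  assumes S: "compact S" "measure lborel S > 0" and a: "a > 0" and sub: "cube x a \<subseteq> S"
  shows "(a / (real d + 2)) ^ CARD('p) / measure lborel S \<le> christoffel (mu_S S) d x"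
proof (rule christoffel_geI)
  fix P :: "real^'p \<Rightarrow> real" assume P: "P \<in> poly_deg_le d" "P x = 1"
  have cont: "continuous_on K (\<lambda>x. P x * P x)" for K
    using continuous_on_poly_deg_le[OF P(1)] by (intro continuous_intros)
  have "(a / (real d + 2)) ^ CARD('p) \<le> (\<integral>y. indicator (cube x a) y * (P y * P y) \<partial>lborel)"
    by (rule integral_poly_square_on_cube_ge[OF P a])
  also have "\<dots> \<le> (\<integral>y. indicator S y * (P y * P y) \<partial>lborel)"
    using sub
    by (intro integral_mono integrable_indicator_mult_continuous compact_cube S(1) cont)
       (auto simp: indicator_def)
  finally show "(a / (real d + 2)) ^ CARD('p) / measure lborel S \<le> (\<integral>y. (P y)\<^sup>2 \<partial>mu_S S)"
    using S cont[of UNIV]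
    by (simp add: integral_mu_S divide_right_mono power2_eq_square)
qed

subsection \<open>Upper bound away from the support\<close>

lemma abs_needle_factor_le:
  assumes "0 < a" "a \<le> dist x y" "dist x y \<le> a + D"
  shows "\<bar>needle_factor x ((a\<^sup>2 + (a + D)\<^sup>2) / 2) y\<bar> \<le> ((a + D)\<^sup>2 - a\<^sup>2) / ((a + D)\<^sup>2 + a\<^sup>2)"
proof -
  define R where "R = (a\<^sup>2 + (a + D)\<^sup>2) / 2"
  have R: "R > 0" using assms(1) by (simp add: R_def add_pos_nonneg)
  have "a\<^sup>2 \<le> (dist x y)\<^sup>2" "(dist x y)\<^sup>2 \<le> (a + D)\<^sup>2"
    using assms by (auto intro!: power_mono)
  then have "1 - (a + D)\<^sup>2 / R \<le> 1 - (dist x y)\<^sup>2 / R" "1 - (dist x y)\<^sup>2 / R \<le> 1 - a\<^sup>2 / R"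
    using R by (auto intro!: divide_right_mono)
  moreover have W: "(a + D)\<^sup>2 + a\<^sup>2 \<noteq> 0" using assms(1) by (simp add: add_nonneg_pos)
  then have "1 - a\<^sup>2 / R = ((a + D)\<^sup>2 - a\<^sup>2) / ((a + D)\<^sup>2 + a\<^sup>2)"
    by (simp add: R_def divide_simps)
  moreover have "1 - (a + D)\<^sup>2 / R = - (((a + D)\<^sup>2 - a\<^sup>2) / ((a + D)\<^sup>2 + a\<^sup>2))"
    using W by (simp add: R_def divide_simps)
  ultimately show ?thesis
    by (simp add: R_def[symmetric] needle_factor_eq abs_le_iff)
qed

lemma needle_ratio_le_exp:
  fixes a r D :: real
  assumes "0 < r" "r \<le> D" "r \<le> a"
  shows "((a + D)\<^sup>2 - a\<^sup>2) / ((a + D)\<^sup>2 + a\<^sup>2) \<le> exp (- (2 * r\<^sup>2 / (5 * D\<^sup>2)))"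
proof -
  define W where "W = (a + D)\<^sup>2 + a\<^sup>2"
  have W: "W > 0" using assms by (simp add: W_def add_nonneg_pos)
  have r2: "r\<^sup>2 \<le> a\<^sup>2" "r\<^sup>2 \<le> D\<^sup>2"
    by (rule power_mono, use assms in auto)+
  have "r\<^sup>2 * W \<le> a\<^sup>2 * (5 * D\<^sup>2)"
  proof (cases "a \<le> D")
    case True
    have "(a + D)\<^sup>2 \<le> (2 * D)\<^sup>2" "a\<^sup>2 \<le> D\<^sup>2"
      by (rule power_mono, use True assms in auto)+
    then have "W \<le> 5 * D\<^sup>2" by (simp add: W_def power_mult_distrib)
    then show ?thesis using r2(1) W by (intro mult_mono) auto
  next
    case False
    have "(a + D)\<^sup>2 \<le> (2 * a)\<^sup>2"
      by (rule power_mono, use False assms in auto)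
    then have "W \<le> 5 * a\<^sup>2" by (simp add: W_def power_mult_distrib)
    then have "r\<^sup>2 * W \<le> D\<^sup>2 * (5 * a\<^sup>2)" using r2(2) W by (intro mult_mono) auto
    then show ?thesis by (simp add: algebra_simps)
  qed
  then have "2 * r\<^sup>2 / (5 * D\<^sup>2) \<le> 2 * a\<^sup>2 / W"
    using W assms by (simp add: divide_le_eq le_divide_eq field_simps)
  moreover have "((a + D)\<^sup>2 - a\<^sup>2) / W = 1 - 2 * a\<^sup>2 / W"
    using W by (simp add: divide_simps) (simp add: W_def)
  ultimately have "((a + D)\<^sup>2 - a\<^sup>2) / W \<le> 1 + (- (2 * r\<^sup>2 / (5 * D\<^sup>2)))" by simp
  also have "\<dots> \<le> exp (- (2 * r\<^sup>2 / (5 * D\<^sup>2)))" by (rule exp_ge_add_one_self)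
  finally show ?thesis unfolding W_def .
qed

lemma christoffel_le_of_bounded_on_support:
  fixes S :: "(real^'p::finite) set"
  assumes S: "compact S" "measure lborel S > 0"
    and P: "P \<in> poly_deg_le d" "P x = 1" and bound: "\<And>y. y \<in> S \<Longrightarrow> (P y)\<^sup>2 \<le> c"
  shows "christoffel (mu_S S) d x \<le> c"
proof -
  have cont: "continuous_on K (\<lambda>y. (P y)\<^sup>2)" for K
    using continuous_on_poly_deg_le[OF P(1)] by (intro continuous_intros)
  have "christoffel (mu_S S) d x \<le> (\<integral>y. (P y)\<^sup>2 \<partial>mu_S S)"
    by (rule christoffel_le_integral[OF P])
  also have "\<dots> = (\<integral>y. indicator S y * (P y)\<^sup>2 \<partial>lborel) / measure lborel S"
    by (rule integral_mu_S[OF S cont])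
  also have "(\<integral>y. indicator S y * (P y)\<^sup>2 \<partial>lborel) \<le> (\<integral>y. indicator S y * c \<partial>lborel)"
    using bound
    by (intro integral_mono integrable_indicator_mult_continuous S(1) cont continuous_on_const)
       (auto simp: indicator_def)
  finally show ?thesis using S(2) by (simp add: divide_right_mono)
qed

lemma abs_needle_factor_le_exp:
  fixes S :: "(real^'p::finite) set" and x :: "real^'p"
  defines "a \<equiv> infdist x S"
  assumes S: "compact S" "S \<noteq> {}" and r: "0 < r" "r \<le> diameter S" "r \<le> a" and y: "y \<in> S"
  shows "\<bar>needle_factor x ((a\<^sup>2 + (a + diameter S)\<^sup>2) / 2) y\<bar> \<le> exp (- (2 * r\<^sup>2 / (5 * (diameter S)\<^sup>2)))"
proof -
  obtain s where s: "s \<in> S" "a = dist x s"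
    using infdist_attains_inf[OF compact_imp_closed[OF S(1)] S(2)] by (metis a_def)
  have "dist x y \<le> dist x s + dist s y" by (rule dist_triangle)
  also have "dist s y \<le> diameter S"
    by (rule diameter_bounded_bound[OF compact_imp_bounded[OF S(1)] s(1) y])
  finally have "dist x y \<le> a + diameter S" using s by simp
  moreover have "a \<le> dist x y" unfolding a_def by (rule infdist_le[OF y])
  ultimately have "\<bar>needle_factor x ((a\<^sup>2 + (a + diameter S)\<^sup>2) / 2) y\<bar>
      \<le> ((a + diameter S)\<^sup>2 - a\<^sup>2) / ((a + diameter S)\<^sup>2 + a\<^sup>2)"
    using r by (intro abs_needle_factor_le) auto
  also have "\<dots> \<le> exp (- (2 * r\<^sup>2 / (5 * (diameter S)\<^sup>2)))"
    using r by (intro needle_ratio_le_exp) auto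
  finally show ?thesis .
qed

lemma christoffel_le_exp_infdist:
  fixes S :: "(real^'p::finite) set"
  assumes S: "compact S" "S \<noteq> {}" "measure lborel S > 0"
    and r: "0 < r" "r \<le> diameter S" "r \<le> infdist x S" and d: "d \<ge> 1"
  shows "christoffel (mu_S S) d x \<le> exp (- (2 * r\<^sup>2 / (5 * (diameter S)\<^sup>2))) ^ (d - 1)"
proof -
  define a where "a = infdist x S"
  define e where "e = exp (- (2 * r\<^sup>2 / (5 * (diameter S)\<^sup>2)))"
  define P where "P y = needle_factor x ((a\<^sup>2 + (a + diameter S)\<^sup>2) / 2) y ^ (d div 2)" for y
  have "(\<lambda>y. needle_factor x ((a\<^sup>2 + (a + diameter S)\<^sup>2) / 2) y ^ (d div 2)) \<in> poly_deg_le (2 * (d div 2))"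
    by (rule poly_deg_le_needle_factor_power)
  then have P: "P \<in> poly_deg_le d" "P x = 1"
    by (auto simp: P_def[abs_def] needle_factor_def intro: poly_deg_le_mono)
  have "(P y)\<^sup>2 \<le> e ^ (d - 1)" if y: "y \<in> S" for y
  proof -
    have "\<bar>needle_factor x ((a\<^sup>2 + (a + diameter S)\<^sup>2) / 2) y\<bar> ^ (2 * (d div 2)) \<le> e ^ (2 * (d div 2))"
      using abs_needle_factor_le_exp[OF S(1,2) r y] by (intro power_mono) (auto simp: a_def e_def)
    then have "(P y)\<^sup>2 \<le> e ^ (2 * (d div 2))"
      unfolding P_def by (simp add: power_even_abs mult.commute flip: power_mult)
    also have "\<dots> \<le> e ^ (d - 1)"
      by (intro power_decreasing) (auto simp: e_def)
    finally show ?thesis .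
  qed
  then show ?thesis
    unfolding e_def by (rule christoffel_le_of_bounded_on_support[OF S(1,3) P])
qed

section \<open>The degree condition and the threshold\<close>

lemma sdim_Suc_Suc:
  "real (Suc (Suc m)) * real (sdim (Suc (Suc m)) d) = real (Suc (Suc m) + d) * real (sdim (Suc m) d)"
proof -
  have "Suc (Suc m) * ((Suc (Suc m) + d) choose d) = (Suc (Suc m) + d) * ((Suc m + d) choose d)"
    using binomial_absorb_comp[of "Suc (Suc m) + d" d] by simp
  then show ?thesis unfolding sdim_def by (metis of_nat_mult)
qed

lemma sdim_bounds:
  assumes "p \<ge> 1"
  shows "((real d + 1) / real p) ^ p \<le> real (sdim p d)" "real (sdim p d) \<le> (real d + 1) ^ p"
proof -
  obtain m where p: "p = Suc m" using assms by (cases p) auto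
  have "((real d + 1) / real (Suc m)) ^ Suc m \<le> real (sdim (Suc m) d)
      \<and> real (sdim (Suc m) d) \<le> (real d + 1) ^ Suc m"
  proof (induction m)
    case 0
    show ?case by (simp add: sdim_def binomial_Suc_n)
  next
    case (Suc m)
    define s where "s = real (sdim (Suc m) d)"
    have s': "real (sdim (Suc (Suc m)) d) = (real m + 2 + real d) / (real m + 2) * s"
      using sdim_Suc_Suc[of m d] by (simp add: s_def field_simps)
    have "((real d + 1) / (real m + 2)) ^ Suc (Suc m)
        \<le> ((real m + 2 + real d) / (real m + 2)) * ((real d + 1) / real (Suc m)) ^ Suc m"
      by (simp only: power_Suc, intro mult_mono power_mono divide_left_mono divide_right_mono) auto
    also have "\<dots> \<le> ((real m + 2 + real d) / (real m + 2)) * s"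
      using Suc.IH by (intro mult_left_mono) (auto simp: s_def)
    finally have lower: "((real d + 1) / (real m + 2)) ^ Suc (Suc m) \<le> real (sdim (Suc (Suc m)) d)"
      by (simp add: s')
    have "(real m + 2 + real d) / (real m + 2) \<le> real d + 1"
      by (simp add: divide_le_eq algebra_simps)
    then have "real (sdim (Suc (Suc m)) d) \<le> (real d + 1) * (real d + 1) ^ Suc m"
      unfolding s' using Suc.IH by (intro mult_mono) (auto simp: s_def)
    with lower show ?case by (simp add: add.commute)
  qed
  then show "((real d + 1) / real p) ^ p \<le> real (sdim p d)" "real (sdim p d) \<le> (real d + 1) ^ p"
    by (simp_all add: p)
qed

lemma omega_pos: "omega p > 0"
  unfolding omega_def by (intro divide_pos_pos mult_pos_pos Gamma_real_pos) auto

lemma alpha_thr_le: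
  assumes "\<delta> > 0" "volS > 0"
  shows "alpha_thr p \<delta> volS d \<le> \<delta> ^ p * omega p / volS"
proof -
  have "(real d + 1) * (real d + 2) * (real d + 3)
      \<le> (real d + real p + 1) * (real d + real p + 2) * (2 * real d + real p + 6)"
    by (intro mult_mono) auto
  then show ?thesis
    unfolding alpha_thr_def using assms omega_pos[of p]
    by (intro mult_left_le) (auto simp: divide_le_eq)
qed

lemma alpha_thr_le_scaled_christoffel:
  fixes S :: "(real^'p::finite) set"
  defines "p \<equiv> CARD('p)"
  assumes S: "compact S" "measure lborel S > 0" and \<delta>: "\<delta> > 0"
    and sub: "cball x (real p * (2 * real p * (omega p + 1) * \<delta>)) \<subseteq> S"
  shows "alpha_thr p \<delta> (measure lborel S) d \<le> real (sdim p d) * christoffel (mu_S S) d x"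
proof -
  define w where "w = omega p"
  define V where "V = measure lborel S"
  define a where "a = 2 * real p * (w + 1) * \<delta>"
  have p: "p \<ge> 1" by (simp add: p_def Suc_le_eq)
  have w: "w > 0" by (simp add: w_def omega_pos)
  have a: "a > 0" using p w \<delta> by (simp add: a_def)
  have "cube x a \<subseteq> S"
    using cube_subset_cball[of x a] sub by (simp add: a_def w_def p_def)
  then have christoffel: "(a / (real d + 2)) ^ p / V \<le> christoffel (mu_S S) d x"
    unfolding p_def V_def by (rule christoffel_ge_cube[OF S a])
  have "1 / 2 \<le> (real d + 1) / (real d + 2)" by (simp add: field_simps)
  then have "(1 / 2) * (a / real p) \<le> (real d + 1) / (real d + 2) * (a / real p)"
    using a by (intro mult_right_mono) auto
  then have "a / (2 * real p) \<le> (real d + 1) / real p * (a / (real d + 2))"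
    by (simp add: field_simps)
  then have "(a / (2 * real p)) ^ p \<le> ((real d + 1) / real p) ^ p * (a / (real d + 2)) ^ p"
    using a p by (simp add: power_mult_distrib[symmetric] power_mono)
  also have "\<dots> \<le> real (sdim p d) * (a / (real d + 2)) ^ p"
    using sdim_bounds(1)[OF p] a by (intro mult_right_mono) auto
  finally have scaled: "(a / (2 * real p)) ^ p \<le> real (sdim p d) * (a / (real d + 2)) ^ p" .
  have "a / (2 * real p) = (w + 1) * \<delta>" using p by (simp add: a_def)
  moreover have "w \<le> (w + 1) ^ p" using w p self_le_power[of "w + 1" p] by simp
  ultimately have "w * \<delta> ^ p \<le> (a / (2 * real p)) ^ p"
    using \<delta> by (simp add: power_mult_distrib mult_right_mono)
  then have "alpha_thr p \<delta> V d \<le> real (sdim p d) * (a / (real d + 2)) ^ p / V"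
    using alpha_thr_le[OF \<delta>, of V p d] scaled S(2)
    by (auto simp: w_def V_def mult.commute intro: order_trans divide_right_mono)
  also have "\<dots> = real (sdim p d) * ((a / (real d + 2)) ^ p / V)" by simp
  also have "\<dots> \<le> real (sdim p d) * christoffel (mu_S S) d x"
    using christoffel by (rule mult_left_mono) simp
  finally show ?thesis by (simp add: V_def)
qed

lemma deg_cond_imp_exp_bound:
  assumes "deg_cond p \<delta> D V d" "p \<ge> 1" "\<delta> > 0" "D > 0"
  shows "8 * exp (- (\<delta> * real d / D)) * real d ^ p * (1 / real p) ^ p \<le> alpha_thr p \<delta> V d"
proof -
  define t where "t = \<delta> * real d / (\<delta> + D)"
  have t: "0 \<le> t" "t \<le> \<delta> * real d / D"
    using assms by (auto simp: t_def intro!: divide_left_mono)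
  have "8 * exp (- (\<delta> * real d / D)) \<le> 8 * exp (- t)" using t by simp
  also have "\<dots> \<le> 8 * 2 powr (- t)"
  proof -
    have "t * ln 2 \<le> t" using t ln_2_less_1 by (intro mult_right_le_one_le) auto
    then show ?thesis by (simp add: powr_def)
  qed
  also have "\<dots> = 2 powr (3 - t)"
    by (simp add: powr_diff powr_minus divide_inverse)
  finally have "8 * exp (- (\<delta> * real d / D)) \<le> 2 powr (3 - t)" .
  moreover have "(1 / real p) ^ p \<le> (exp 1 / real p) ^ p"
    using assms(2) by (intro power_mono divide_right_mono) auto
  ultimately have "8 * exp (- (\<delta> * real d / D)) * real d ^ p * (1 / real p) ^ p
      \<le> 2 powr (3 - t) * real d ^ p * (exp 1 / real p) ^ p * 1"
    by (simp add: mult_mono mult_right_mono)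
  also have "\<dots> \<le> 2 powr (3 - t) * real d ^ p * (exp 1 / real p) ^ p * exp (real p ^ 2 / real d)"
    by (intro mult_left_mono) auto
  also have "\<dots> \<le> alpha_thr p \<delta> V d"
    using assms(1) by (simp add: deg_cond_def t_def)
  finally show ?thesis .
qed

text \<open>Since \<open>alpha_thr \<le> \<delta> * omega p / V\<close>, a small \<open>\<delta>\<close> forces \<open>2 powr (- t)\<close> in \<open>deg_cond\<close>
  to be small, i.e.\ \<open>\<delta> * d\<close> to be large.\<close>

lemma deg_cond_imp_degree_large:
  assumes dc: "deg_cond p \<delta> D V d" and p: "p \<ge> 1" and d: "d \<ge> 1"
    and \<delta>: "\<delta> > 0" "\<delta> \<le> 1" and D: "D > 0" and V: "V > 0"
    and small: "\<delta> \<le> 8 * V * (1 / real p) ^ p / omega p * 2 powr (- (M / D))"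
  shows "M \<le> \<delta> * real d"
proof -
  define t where "t = \<delta> * real d / (\<delta> + D)"
  define K where "K = 8 * V * (1 / real p) ^ p / omega p"
  have w: "omega p > 0" by (rule omega_pos)
  have "2 powr (3 - t) * 1 * (1 / real p) ^ p * 1
      \<le> 2 powr (3 - t) * real d ^ p * (exp 1 / real p) ^ p * exp (real p ^ 2 / real d)"
    using d p by (intro mult_mono power_mono divide_right_mono) (auto simp: one_le_power)
  also have "\<dots> \<le> alpha_thr p \<delta> V d" using dc by (simp add: deg_cond_def t_def)
  also have "\<dots> \<le> \<delta> ^ p * omega p / V" by (rule alpha_thr_le[OF \<delta>(1) V])
  also have "\<dots> \<le> \<delta> * omega p / V"
    using \<delta> p w V power_decreasing[of 1 p \<delta>] by (intro divide_right_mono mult_right_mono) auto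
  finally have "2 powr (3 - t) * (1 / real p) ^ p \<le> \<delta> * omega p / V" by simp
  moreover have "2 powr (- t) * K = (2 powr (3 - t) * (1 / real p) ^ p) * (V / omega p)"
    by (simp add: K_def powr_diff powr_minus divide_inverse)
  ultimately have "2 powr (- t) * K \<le> (\<delta> * omega p / V) * (V / omega p)"
    using V w by (metis mult_right_mono divide_nonneg_pos less_eq_real_def)
  then have "2 powr (- t) * K \<le> \<delta>" using V w by simp
  also have "\<delta> \<le> 2 powr (- (M / D)) * K" using small by (simp add: K_def mult.commute)
  finally have "2 powr (- t) * K \<le> 2 powr (- (M / D)) * K" .
  moreover have "K > 0" using V w p by (simp add: K_def)
  ultimately have "2 powr (- t) \<le> 2 powr (- (M / D))" by simp
  then have "M \<le> t * D" using D by (simp add: divide_le_eq)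
  also have "\<dots> \<le> t * (\<delta> + D)" using \<delta> D by (intro mult_left_mono) (auto simp: t_def)
  also have "\<dots> = \<delta> * real d" using \<delta> D by (simp add: t_def)
  finally show ?thesis .
qed

lemma scaled_christoffel_lt_alpha_thr:
  fixes S :: "(real^'p::finite) set"
  defines "p \<equiv> CARD('p)"
  assumes S: "compact S" "S \<noteq> {}" "measure lborel S > 0" "diameter S > 0"
    and \<delta>: "\<delta> > 0" "sqrt (5 * diameter S * \<delta>) \<le> diameter S"
    and d: "d \<ge> 1" "deg_cond p \<delta> (diameter S) (measure lborel S) d"
    and large: "(2 * real p) ^ p < exp ((real d - 2) * \<delta> / diameter S)"
    and x: "sqrt (5 * diameter S * \<delta>) \<le> infdist x S"
  shows "real (sdim p d) * christoffel (mu_S S) d x < alpha_thr p \<delta> (measure lborel S) d"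
proof -
  define D where "D = diameter S"
  define X where "X = exp (- (\<delta> * real d / D))"
  define E where "E = exp ((real d - 2) * \<delta> / D)"
  have p: "p \<ge> 1" by (simp add: p_def Suc_le_eq)
  have D: "D > 0" using S by (simp add: D_def)
  have "christoffel (mu_S S) d x \<le> exp (- (2 * (sqrt (5 * D * \<delta>))\<^sup>2 / (5 * D\<^sup>2))) ^ (d - 1)"
    unfolding D_def by (rule christoffel_le_exp_infdist) (use S \<delta> d x in auto)
  also have "\<dots> = exp (real (d - 1) * (- (2 * \<delta> / D)))"
    using D \<delta> by (simp add: exp_of_nat_mult[symmetric] power2_eq_square field_simps)
  also have "real (d - 1) * (- (2 * \<delta> / D)) = - (\<delta> * real d / D) - (real d - 2) * \<delta> / D"
    using d D by (simp add: of_nat_diff field_simps)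
  finally have christoffel: "christoffel (mu_S S) d x \<le> X / E"
    by (simp add: X_def E_def exp_diff)
  have "real (sdim p d) \<le> (2 * real d) ^ p"
    using sdim_bounds(2)[OF p, of d] d power_mono[of "real d + 1" "2 * real d" p] by simp
  then have "real (sdim p d) * christoffel (mu_S S) d x \<le> (2 * real d) ^ p * (X / E)"
    using christoffel christoffel_nonneg by (intro mult_mono) auto
  also have "\<dots> = (2 * real p) ^ p * (X * real d ^ p * (1 / real p) ^ p) / E"
    using p by (simp add: power_mult_distrib power_divide field_simps)
  also have "\<dots> < E * (X * real d ^ p * (1 / real p) ^ p) / E"
    using large d p by (intro divide_strict_right_mono mult_strict_right_mono) (auto simp: E_def X_def D_def)
  also have "\<dots> = X * real d ^ p * (1 / real p) ^ p" by (simp add: E_def)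
  also have "\<dots> \<le> 8 * X * real d ^ p * (1 / real p) ^ p" by (simp add: X_def)
  also have "\<dots> \<le> alpha_thr p \<delta> (measure lborel S) d"
    unfolding X_def D_def by (rule deg_cond_imp_exp_bound) (use d p \<delta> S in auto)
  finally show ?thesis .
qed

section \<open>Hausdorff convergence of sandwiched sets\<close>

lemma hausdorff_dist_le:
  assumes "\<forall>x\<in>X. \<exists>y\<in>Y. dist x y \<le> e" "\<forall>y\<in>Y. \<exists>x\<in>X. dist x y \<le> e"
  shows "hausdorff_dist X Y \<le> ereal e"
proof -
  have "(SUP x\<in>X. INF y\<in>Y. ereal (dist x y)) \<le> ereal e"
    using assms(1) by (fastforce intro!: SUP_least intro: INF_lower2)
  moreover have "(SUP y\<in>Y. INF x\<in>X. ereal (dist x y)) \<le> ereal e"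
    using assms(2) by (fastforce intro!: SUP_least intro: INF_lower2)
  ultimately show ?thesis by (simp add: hausdorff_dist_def)
qed

lemma hausdorff_dist_nonneg:
  assumes "X \<noteq> {}"
  shows "0 \<le> hausdorff_dist X Y"
proof -
  obtain x where x: "x \<in> X" using assms by blast
  have "0 \<le> (INF y\<in>Y. ereal (dist x y))" by (rule INF_greatest) auto
  also have "\<dots> \<le> (SUP x\<in>X. INF y\<in>Y. ereal (dist x y))" by (rule SUP_upper[OF x])
  finally show ?thesis by (simp add: hausdorff_dist_def le_max_iff_disj)
qed

lemma uniform_cball_near_interior:
  fixes K A :: "'a::metric_space set"
  assumes "compact K" "K \<subseteq> closure (interior A)" "\<epsilon> > 0"
  obtains \<rho> where "\<rho> > 0" "\<And>y. y \<in> K \<Longrightarrow> \<exists>z. dist y z < \<epsilon> \<and> cball z \<rho> \<subseteq> A"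
proof -
  have cover: "K \<subseteq> (\<Union>z\<in>interior A. ball z \<epsilon>)"
    using assms(2,3) by (force simp: closure_approachable dist_commute)
  obtain F where F: "F \<subseteq> interior A" "finite F" "K \<subseteq> (\<Union>z\<in>F. ball z \<epsilon>)"
    by (rule compactE_image[OF assms(1) _ cover]) auto
  have "\<forall>z\<in>F. \<exists>\<rho>>0. cball z \<rho> \<subseteq> A" using F(1) mem_interior_cball by blast
  then obtain \<rho>z where \<rho>z: "\<And>z. z \<in> F \<Longrightarrow> \<rho>z z > 0 \<and> cball z (\<rho>z z) \<subseteq> A"
    by metis
  define \<rho> where "\<rho> = Min (insert 1 (\<rho>z ` F))"
  have "\<rho> > 0" using F(2) \<rho>z by (simp add: \<rho>_def)
  moreover have "\<exists>z. dist y z < \<epsilon> \<and> cball z \<rho> \<subseteq> A" if y: "y \<in> K" for y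
  proof -
    obtain z where z: "z \<in> F" "dist y z < \<epsilon>" using F(3) y by (force simp: dist_commute)
    have "cball z \<rho> \<subseteq> cball z (\<rho>z z)" using F(2) z(1) by (intro subset_cball) (simp add: \<rho>_def)
    then show ?thesis using \<rho>z[OF z(1)] z(2) by blast
  qed
  ultimately show ?thesis using that by blast
qed

lemma frontier_meets_closed_segment:
  fixes a b :: "'a::real_normed_vector"
  assumes "a \<in> A" "b \<notin> A"
  obtains y where "y \<in> closed_segment a b" "y \<in> frontier A"
  using connected_Int_frontier[OF connected_segment, of a b A] assms by blast

context
  fixes S T :: "'a::euclidean_space set" and a r \<epsilon> \<rho> :: real
  assumes S: "compact S" "S \<noteq> {}"
    and inner: "\<And>x. cball x a \<subseteq> S \<Longrightarrow> x \<in> T"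
    and outer: "\<And>x. x \<in> T \<Longrightarrow> infdist x S < r"
    and a: "a \<le> \<rho>" and r: "r \<le> \<epsilon>"
begin

lemma near_support_of_mem:
  assumes "x \<in> T"
  obtains y where "y \<in> S" "dist x y < r"
  using infdist_attains_inf[OF compact_imp_closed[OF S(1)] S(2), of x] outer[OF assms] by metis

lemma hausdorff_dist_sandwich_le:
  assumes \<rho>: "\<And>y. y \<in> S \<Longrightarrow> \<exists>z. dist y z < \<epsilon> \<and> cball z \<rho> \<subseteq> S"
  shows "0 \<le> hausdorff_dist T S \<and> hausdorff_dist T S \<le> ereal \<epsilon>"
proof -
  have near_T: "\<exists>x\<in>T. dist x y \<le> \<epsilon>" if y: "y \<in> S" for y
  proof -
    obtain z where z: "dist y z < \<epsilon>" "cball z \<rho> \<subseteq> S" using \<rho>[OF y] by blast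
    then have "z \<in> T" using inner subset_cball[OF a] by blast
    then show ?thesis using z by (intro bexI[of _ z]) (auto simp: dist_commute)
  qed
  have near_S: "\<exists>y\<in>S. dist x y \<le> \<epsilon>" if x: "x \<in> T" for x
  proof -
    obtain y where "y \<in> S" "dist x y < r" using x by (rule near_support_of_mem)
    then show ?thesis using r by (intro bexI[of _ y]) auto
  qed
  have "T \<noteq> {}" using near_T S(2) by blast
  then show ?thesis using near_T near_S by (auto intro!: hausdorff_dist_nonneg hausdorff_dist_le)
qed

lemma mem_interior_of_cball_subset:
  assumes "0 < a" "cball x (2 * a) \<subseteq> S"
  shows "x \<in> interior T"
proof -
  have "x' \<in> T" if x': "x' \<in> ball x a" for x'
  proof -
    have "cball x' a \<subseteq> cball x (2 * a)"
    proof
      fix y assume "y \<in> cball x' a"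
      then show "y \<in> cball x (2 * a)" using x' dist_triangle[of x y x'] by simp
    qed
    then show ?thesis using assms(2) inner by blast
  qed
  then show ?thesis using assms(1) by (auto simp: mem_interior)
qed

lemma frontier_support_near_frontier:
  assumes \<rho>: "\<And>y. y \<in> frontier S \<Longrightarrow>
      \<exists>z w. dist y z < \<epsilon> \<and> dist y w < \<epsilon> \<and> cball z \<rho> \<subseteq> S \<and> cball w \<rho> \<inter> S = {}"
    and r_le: "r \<le> \<rho>" and y: "y \<in> frontier S"
  shows "\<exists>x\<in>frontier T. dist x y \<le> \<epsilon>"
proof -
  obtain z w where zw: "dist y z < \<epsilon>" "dist y w < \<epsilon>" "cball z \<rho> \<subseteq> S" "cball w \<rho> \<inter> S = {}"
    using \<rho>[OF y] by blast
  have "z \<in> T" using inner zw(3) subset_cball[OF a] by blast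
  moreover have "w \<notin> T"
  proof
    assume "w \<in> T"
    then obtain s where "s \<in> S" "dist w s < r" by (rule near_support_of_mem)
    then have "s \<in> cball w \<rho> \<inter> S" using r_le by auto
    then show False using zw(4) by blast
  qed
  ultimately obtain x where x: "x \<in> closed_segment z w" "x \<in> frontier T"
    by (rule frontier_meets_closed_segment)
  have "closed_segment z w \<subseteq> ball y \<epsilon>" using zw by (intro closed_segment_subset) auto
  then show ?thesis using x by (intro bexI[of _ x]) (auto simp: dist_commute)
qed

lemma frontier_near_frontier_support:
  assumes a_pos: "0 < a" and a_le: "2 * a \<le> \<epsilon>" and x: "x \<in> frontier T"
  shows "\<exists>y\<in>frontier S. dist x y \<le> \<epsilon>"
proof (cases "x \<in> S")
  case True
  have "x \<notin> interior T" using x by (simp add: frontier_def)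
  then obtain w where w: "w \<notin> S" "dist x w \<le> 2 * a"
    using mem_interior_of_cball_subset[OF a_pos] by (auto simp: subset_iff)
  obtain y where y: "y \<in> closed_segment x w" "y \<in> frontier S"
    using True w(1) by (rule frontier_meets_closed_segment)
  then show ?thesis
    using dist_in_closed_segment[OF y(1)] w(2) a_le by (intro bexI[of _ y]) (auto simp: dist_commute)
next
  case False
  have "closure T \<subseteq> {x. infdist x S \<le> r}"
    using outer by (intro closure_minimal closed_Collect_le continuous_intros) (auto intro: less_imp_le)
  then have "infdist x S \<le> r" using x by (auto simp: frontier_def)
  moreover obtain s where s: "s \<in> S" "infdist x S = dist x s"
    using infdist_attains_inf[OF compact_imp_closed[OF S(1)] S(2)] by blast
  moreover obtain y where y: "y \<in> closed_segment s x" "y \<in> frontier S"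
    using s(1) False by (rule frontier_meets_closed_segment)
  ultimately show ?thesis
    using dist_in_closed_segment[OF y(1)] r by (intro bexI[of _ y]) (auto simp: dist_commute)
qed

lemma hausdorff_dist_frontier_sandwich_le:
  assumes \<rho>: "\<And>y. y \<in> frontier S \<Longrightarrow>
      \<exists>z w. dist y z < \<epsilon> \<and> dist y w < \<epsilon> \<and> cball z \<rho> \<subseteq> S \<and> cball w \<rho> \<inter> S = {}"
    and a_pos: "0 < a" and a_le: "2 * a \<le> \<epsilon>" and r_le: "r \<le> \<rho>"
  shows "0 \<le> hausdorff_dist (frontier T) (frontier S) \<and> hausdorff_dist (frontier T) (frontier S) \<le> ereal \<epsilon>"
proof -
  have "frontier S \<noteq> {}"
    using S frontier_eq_empty[of S] not_bounded_UNIV compact_imp_bounded by metis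
  then have "frontier T \<noteq> {}"
    using frontier_support_near_frontier[OF \<rho> r_le] by blast
  then show ?thesis
    using frontier_support_near_frontier[OF \<rho> r_le] frontier_near_frontier_support[OF a_pos a_le]
    by (auto intro!: hausdorff_dist_nonneg hausdorff_dist_le)
qed

end

lemma ereal_tendsto_zeroI:
  fixes f :: "nat \<Rightarrow> ereal"
  assumes "\<And>\<epsilon>. \<epsilon> > 0 \<Longrightarrow> eventually (\<lambda>k. 0 \<le> f k \<and> f k \<le> ereal \<epsilon>) sequentially"
  shows "f \<longlonglongrightarrow> 0"
proof (rule order_tendstoI)
  fix c :: ereal assume "c < 0"
  with assms[of 1] show "eventually (\<lambda>k. c < f k) sequentially"
    by (auto elim: eventually_mono)
next
  fix c :: ereal assume "0 < c"
  obtain \<epsilon> where "\<epsilon> > 0" "ereal \<epsilon> < c"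
  proof (cases c)
    case (real x)
    then show ?thesis using that[of "x / 2"] \<open>0 < c\<close> by auto
  qed (use that[of 1] \<open>0 < c\<close> in auto)
  with assms[of \<epsilon>] show "eventually (\<lambda>k. f k < c) sequentially"
    by (auto elim: eventually_mono)
qed

lemma uniform_cballs_near_frontier:
  fixes S :: "'a::heine_borel set"
  assumes "compact S" "closure (interior S) = S" "\<epsilon> > 0"
  obtains \<rho> where "\<rho> > 0" "\<And>y. y \<in> frontier S \<Longrightarrow>
      \<exists>z w. dist y z < \<epsilon> \<and> dist y w < \<epsilon> \<and> cball z \<rho> \<subseteq> S \<and> cball w \<rho> \<inter> S = {}"
proof -
  have K: "compact (frontier S)" using assms(1) by (rule compact_frontier)
  have "frontier S \<subseteq> closure (interior S)" "frontier S \<subseteq> closure (interior (- S))"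
    using assms(2) compact_imp_closed[OF assms(1)]
    by (auto simp: frontier_def interior_complement closure_complement)
  then obtain \<rho>1 \<rho>2 where \<rho>: "\<rho>1 > 0" "\<rho>2 > 0"
    and inside: "\<And>y. y \<in> frontier S \<Longrightarrow> \<exists>z. dist y z < \<epsilon> \<and> cball z \<rho>1 \<subseteq> S"
    and outside: "\<And>y. y \<in> frontier S \<Longrightarrow> \<exists>w. dist y w < \<epsilon> \<and> cball w \<rho>2 \<subseteq> - S"
    using uniform_cball_near_interior[OF K _ assms(3)] by metis
  have "\<exists>z w. dist y z < \<epsilon> \<and> dist y w < \<epsilon> \<and> cball z (min \<rho>1 \<rho>2) \<subseteq> S \<and> cball w (min \<rho>1 \<rho>2) \<inter> S = {}"
    if y: "y \<in> frontier S" for y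
  proof -
    obtain z w where z: "dist y z < \<epsilon>" "cball z \<rho>1 \<subseteq> S" and w: "dist y w < \<epsilon>" "cball w \<rho>2 \<subseteq> - S"
      using inside[OF y] outside[OF y] by blast
    moreover have "cball z (min \<rho>1 \<rho>2) \<subseteq> cball z \<rho>1" "cball w (min \<rho>1 \<rho>2) \<subseteq> cball w \<rho>2"
      by (simp_all add: subset_cball)
    ultimately show ?thesis by blast
  qed
  then show ?thesis using that \<rho> by (metis min_less_iff_conj)
qed

lemma tendsto_hausdorff_dist_sandwich:
  fixes S :: "'a::euclidean_space set" and T :: "nat \<Rightarrow> 'a set"
  assumes S: "compact S" "closure (interior S) = S" "S \<noteq> {}"
    and a: "a \<longlonglongrightarrow> 0" "\<And>k. a k > 0" and r: "r \<longlonglongrightarrow> 0"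
    and inner: "\<And>k x. cball x (a k) \<subseteq> S \<Longrightarrow> x \<in> T k"
    and outer: "eventually (\<lambda>k. \<forall>x\<in>T k. infdist x S < r k) sequentially"
  shows "(\<lambda>k. hausdorff_dist (T k) S) \<longlonglongrightarrow> 0 \<and>
         (\<lambda>k. hausdorff_dist (frontier (T k)) (frontier S)) \<longlonglongrightarrow> 0"
proof -
  have close: "eventually (\<lambda>k. (0 \<le> hausdorff_dist (T k) S \<and> hausdorff_dist (T k) S \<le> ereal \<epsilon>) \<and>
      (0 \<le> hausdorff_dist (frontier (T k)) (frontier S) \<and>
       hausdorff_dist (frontier (T k)) (frontier S) \<le> ereal \<epsilon>)) sequentially"
    if \<epsilon>: "\<epsilon> > 0" for \<epsilon>
  proof -
    obtain \<rho>1 where \<rho>1: "\<rho>1 > 0" "\<And>y. y \<in> S \<Longrightarrow> \<exists>z. dist y z < \<epsilon> \<and> cball z \<rho>1 \<subseteq> S"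
      using uniform_cball_near_interior[OF S(1) _ \<epsilon>] S(2) by blast
    obtain \<rho>2 where \<rho>2: "\<rho>2 > 0" "\<And>y. y \<in> frontier S \<Longrightarrow>
        \<exists>z w. dist y z < \<epsilon> \<and> dist y w < \<epsilon> \<and> cball z \<rho>2 \<subseteq> S \<and> cball w \<rho>2 \<inter> S = {}"
      using uniform_cballs_near_frontier[OF S(1,2) \<epsilon>] by blast
    define \<eta> where "\<eta> = min (\<epsilon> / 2) (min \<rho>1 \<rho>2)"
    have "\<eta> > 0" using \<epsilon> \<rho>1 \<rho>2 by (simp add: \<eta>_def)
    then have "eventually (\<lambda>k. a k < \<eta>) sequentially" "eventually (\<lambda>k. r k < \<eta>) sequentially"
      using a(1) r by (auto dest: order_tendstoD(2))
    then show ?thesis using outer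
    proof eventually_elim
      case (elim k)
      then have bounds: "a k \<le> \<rho>1" "a k \<le> \<rho>2" "2 * a k \<le> \<epsilon>" "r k \<le> \<epsilon>" "r k \<le> \<rho>2"
        using \<epsilon> by (auto simp: \<eta>_def)
      have outer_k: "\<And>x. x \<in> T k \<Longrightarrow> infdist x S < r k" using elim(3) by blast
      show ?case
        using hausdorff_dist_sandwich_le[OF S(1,3) inner[where k = k] outer_k bounds(1,4) \<rho>1(2)]
          hausdorff_dist_frontier_sandwich_le[OF S(1,3) inner[where k = k] outer_k bounds(2,4) \<rho>2(2) a(2) bounds(3,5)]
        by blast
    qed
  qed
  show ?thesis
    using close by (intro conjI ereal_tendsto_zeroI) (simp_all add: eventually_conj_iff)
qed

lemma measure_pos_of_interior:
  fixes S :: "'a::euclidean_space set"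
  assumes "compact S" "interior S \<noteq> {}"
  shows "measure lborel S > 0"
proof -
  obtain z \<rho> where \<rho>: "\<rho> > 0" "ball z \<rho> \<subseteq> S"
    using assms(2) open_contains_ball[of "interior S"] interior_subset by blast
  have "0 < measure lborel (ball z \<rho>)" using content_ball_pos[OF \<rho>(1)] by simp
  also have "\<dots> \<le> measure lborel S"
    using \<rho>(2) by (intro measure_mono_fmeasurable fmeasurable_compact assms(1)) auto
  finally show ?thesis .
qed

lemma diameter_pos_of_interior:
  fixes S :: "'a::euclidean_space set"
  assumes "bounded S" "interior S \<noteq> {}"
  shows "diameter S > 0"
proof -
  obtain z \<rho> where "\<rho> > 0" "cball z \<rho> \<subseteq> S"
    using assms(2) mem_interior_cball by blast
  then show ?thesis using diameter_subset[of "cball z \<rho>" S] assms(1) by simp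
qed

lemma eventually_scaled_christoffel_lt_alpha_thr:
  fixes S :: "(real^'p::finite) set" and \<delta> :: "nat \<Rightarrow> real" and d :: "nat \<Rightarrow> nat"
  defines "p \<equiv> CARD('p)" and "D \<equiv> diameter S" and "V \<equiv> measure lborel S"
  assumes S: "compact S" "S \<noteq> {}" "V > 0" "D > 0"
    and \<delta>: "\<delta> \<longlonglongrightarrow> 0" "\<And>k. \<delta> k > 0"
    and d: "\<And>k. d k > 0 \<and> deg_cond p (\<delta> k) D V (d k)"
  shows "eventually (\<lambda>k. \<forall>x. sqrt (5 * D * \<delta> k) \<le> infdist x S \<longrightarrow>
           real (sdim p (d k)) * christoffel (mu_S S) (d k) x < alpha_thr p (\<delta> k) V (d k)) sequentially"
proof -
  define M where "M = D * (2 * real p) ^ p + 2"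
  define K where "K = 8 * V * (1 / real p) ^ p / omega p * 2 powr (- (M / D))"
  have p: "p \<ge> 1" by (simp add: p_def Suc_le_eq)
  have "K > 0" using S(3) p omega_pos[of p] by (simp add: K_def)
  then have "eventually (\<lambda>k. \<delta> k < min 1 (min (D / 5) K)) sequentially"
    using S(4) \<delta>(1) by (intro order_tendstoD(2)) auto
  then show ?thesis
  proof eventually_elim
    case (elim k)
    have "M \<le> \<delta> k * real (d k)"
      using elim d[of k] S \<delta>(2)[of k] p
      by (intro deg_cond_imp_degree_large[of p "\<delta> k" D V "d k" M]) (auto simp: K_def)
    then have "(2 * real p) ^ p \<le> (real (d k) - 2) * \<delta> k / D"
      using elim S(4) by (simp add: M_def field_simps)
    also have "\<dots> < exp ((real (d k) - 2) * \<delta> k / D)"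
      using exp_ge_add_one_self[of "(real (d k) - 2) * \<delta> k / D"] by linarith
    finally have large: "(2 * real p) ^ p < exp ((real (d k) - 2) * \<delta> k / D)" .
    have "sqrt (5 * D * \<delta> k) \<le> sqrt (D * D)"
      using elim S(4) by (intro real_sqrt_le_mono) (simp add: field_simps)
    then have "sqrt (5 * D * \<delta> k) \<le> D" using S(4) by simp
    then show ?case
      using scaled_christoffel_lt_alpha_thr[OF S(1,2)] S \<delta>(2)[of k] d[of k] large
      by (simp add: p_def D_def V_def Suc_le_eq)
  qed
qed

theorem theorem3p8:
  fixes S :: "(real^'p::finite) set"
    and \<delta> :: "nat \<Rightarrow> real"
    and d :: "nat \<Rightarrow> nat"
  assumes "compact S" and "closure (interior S) = S" and "S \<noteq> {}"
    and "decseq \<delta>" and "\<And>k. \<delta> k > 0" and "\<delta> \<longlonglongrightarrow> 0"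
    and "\<And>k. d k > 0 \<and> deg_cond CARD('p) (\<delta> k) (diameter S) (measure lborel S) (d k)"
    and "\<And>k m. m > 0 \<Longrightarrow> deg_cond CARD('p) (\<delta> k) (diameter S) (measure lborel S) m \<Longrightarrow> d k \<le> m"
  defines "Sk \<equiv> \<lambda>k. {x. real (sdim CARD('p) (d k)) * christoffel (mu_S S) (d k) x
                        \<ge> alpha_thr CARD('p) (\<delta> k) (measure lborel S) (d k)}"
  shows "(\<lambda>k. hausdorff_dist (Sk k) S) \<longlonglongrightarrow> 0 \<and>
         (\<lambda>k. hausdorff_dist (frontier (Sk k)) (frontier S)) \<longlonglongrightarrow> 0"
proof -
  have "interior S \<noteq> {}" using assms(2,3) by auto
  then have V: "measure lborel S > 0" and D: "diameter S > 0"
    using assms(1) by (auto intro: measure_pos_of_interior diameter_pos_of_interior compact_imp_bounded)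
  show ?thesis
  proof (rule tendsto_hausdorff_dist_sandwich[OF assms(1-3)])
    let ?a = "\<lambda>k. real CARD('p) * (2 * real CARD('p) * (omega CARD('p) + 1) * \<delta> k)"
    show "?a \<longlonglongrightarrow> 0" "\<And>k. ?a k > 0"
      using assms(5,6) omega_pos by (auto intro!: tendsto_eq_intros simp: add_pos_pos)
    show "x \<in> Sk k" if "cball x (?a k) \<subseteq> S" for k x
      unfolding Sk_def using alpha_thr_le_scaled_christoffel[OF assms(1) V assms(5) that] by simp
    show "(\<lambda>k. sqrt (5 * diameter S * \<delta> k)) \<longlonglongrightarrow> 0"
      using tendsto_real_sqrt[OF tendsto_mult_right_zero[OF assms(6)]] by simp
    show "eventually (\<lambda>k. \<forall>x\<in>Sk k. infdist x S < sqrt (5 * diameter S * \<delta> k)) sequentially"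
      using eventually_scaled_christoffel_lt_alpha_thr[OF assms(1,3) V D assms(6,5,7)]
      by (rule eventually_mono) (auto simp: Sk_def not_less[symmetric])
  qed
qed

end
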